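(* Let $L=\mathbb Z^4\subset\mathbb R^4$ with the bilinear form $B(x,y)=xGy^T$, where $G=\begin{pmatrix}2&-1&0&0\\-1&2&-1&-1\\0&-1&2&0\\0&-1&0&2\end{pmatrix}$ (the $D_4$ lattice), and $Q(x)=\frac12B(x,x)$. For $\alpha\in L^\sharp$ and $\beta\in\frac12\mathbb Z^4$ put $\theta_{\alpha,\beta}(\tau,z)=\sum_{v\in\mathbb Z^4}e(B(\beta,v))\,e(\tau Q(\alpha+v)+B(\alpha+v,z))$ on $\mathbb H\times\mathbb C^4$. Let $A=\{(0,0,0,0),(0,0,\frac12,\frac12),(\frac12,0,0,\frac12),(\frac12,0,\frac12,0)\}$ and $\mathcal B=\{(0,0,0,0),(\frac12,\frac12,\frac12,\frac12),(\frac12,0,0,0),(0,\frac12,0,0)\}$. Then the seven functions $\theta_{\alpha,0}^2$ ($\alpha\in A$) and $\theta_{0,\beta}^2$ ($\beta\in\mathcal B$) are $\mathbb C$-linearly independent. Moreover, for any $\alpha\in L^\sharp$ and $\beta\in\frac12\mathbb Z^4$, $$\theta_{\alpha,\beta}^2+\theta_{0,0}^2=\theta_{\alpha,0}^2+\theta_{0,\beta}^2.$$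
   Context: $e(x)=\exp(2\pi ix)$, $\mathbb H$ the upper half plane; $B$ extended bilinearly to $\mathbb C^4$; $L^\sharp=\{v\in\mathbb R^4:B(v,L)\subseteq\mathbb Z\}$ (here $A$ is a set of representatives of $L^\sharp/L$). *)

theory Defs
  imports "HOL-Analysis.Analysis"
begin

definition vec4 :: "'a \<Rightarrow> 'a \<Rightarrow> 'a \<Rightarrow> 'a \<Rightarrow> 'a ^ 4" where
  "vec4 a b c d = (\<chi> i. if i = 0 then a else if i = 1 then b else if i = 2 then c else d)"

definition e :: "complex \<Rightarrow> complex" where
  "e x = exp (2 * complex_of_real pi * \<i> * x)"

definition Gm :: "complex ^ 4 ^ 4" where
  "Gm = vec4 (vec4 2 (-1) 0 0) (vec4 (-1) 2 (-1) (-1)) (vec4 0 (-1) 2 0) (vec4 0 (-1) 0 2)"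

definition Bf :: "complex ^ 4 \<Rightarrow> complex ^ 4 \<Rightarrow> complex" where
  "Bf x y = (\<Sum>i\<in>UNIV. \<Sum>j\<in>UNIV. x $ i * Gm $ i $ j * y $ j)"

definition cvec :: "real ^ 4 \<Rightarrow> complex ^ 4" where
  "cvec x = (\<chi> i. complex_of_real (x $ i))"

definition Qf :: "complex ^ 4 \<Rightarrow> complex" where
  "Qf x = Bf x x / 2"

definition Lat :: "(real ^ 4) set" where
  "Lat = {v. \<forall>i. v $ i \<in> \<int>}"

definition Lsharp :: "(real ^ 4) set" where
  "Lsharp = {v. \<forall>l\<in>Lat. Bf (cvec v) (cvec l) \<in> \<int>}"

definition halfLat :: "(real ^ 4) set" where
  "halfLat = {v. \<forall>i. 2 * v $ i \<in> \<int>}"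

definition theta :: "real ^ 4 \<Rightarrow> real ^ 4 \<Rightarrow> complex \<Rightarrow> complex ^ 4 \<Rightarrow> complex" where
  "theta \<alpha> \<beta> \<tau> z = (\<Sum>\<^sub>\<infinity>v\<in>Lat.
      e (Bf (cvec \<beta>) (cvec v)) * e (\<tau> * Qf (cvec (\<alpha> + v)) + Bf (cvec (\<alpha> + v)) z))"

definition Aset :: "(real ^ 4) set" where
  "Aset = {vec4 0 0 0 0, vec4 0 0 (1/2) (1/2), vec4 (1/2) 0 0 (1/2), vec4 (1/2) 0 (1/2) 0}"

definition Bset :: "(real ^ 4) set" where
  "Bset = {vec4 0 0 0 0, vec4 (1/2) (1/2) (1/2) (1/2), vec4 (1/2) 0 0 0, vec4 0 (1/2) 0 0}"

end

theory Submission
  imports Defs "HOL-Real_Asymp.Real_Asymp"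
begin

text \<open>
  Squaring \<open>\<theta>\<^sub>\<alpha>\<^sub>,\<^sub>\<beta>\<close> gives a sum over pairs \<open>(v, w)\<close> of lattice points in which \<open>\<beta>\<close> only enters
  through the sign \<open>\<chi>\<^sub>\<beta>(v + w) = \<plusminus>1\<close>, so \<open>\<theta>\<^sub>\<alpha>\<^sub>,\<^sub>\<beta>\<^sup>2 - \<theta>\<^sub>\<alpha>\<^sub>,\<^sub>0\<^sup>2\<close> is \<open>-2\<close> times the sum over the
  pairs of sign \<open>-1\<close>. The identity says that this difference does not depend on \<open>\<alpha>\<close>. As
  \<open>\<theta>\<^sup>2\<close> only depends on \<open>\<alpha>\<close> modulo \<open>L\<close> and on \<open>\<beta>\<close> modulo \<open>L\<^sup>\<sharp>\<close>, it suffices to treat the nine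
  pairs of nonzero representatives; for each of them an involutive isometry \<open>M\<close> of \<open>Q\<close> rearranges
  the pairs, \<open>(x, y) \<mapsto> ((x + y + M(x - y))/2, (x + y - M(x - y))/2)\<close>, from \<open>\<alpha> + L\<close> onto \<open>L\<close>,
  keeping \<open>x + y\<close> and \<open>Q x + Q y\<close> and hence every summand.

  For the independence, translating \<open>z\<close> by \<open>\<beta> \<in> \<B>\<close> or by \<open>\<tau>\<alpha>\<close>, \<open>\<alpha> \<in> A\<close>, permutes the seven
  squares up to a common nonzero factor and the identity. Applied to a vanishing combination this
  yields a linear system for the coefficients whose nondegeneracy is checked at \<open>\<tau> = i t\<close>,
  \<open>z = 0\<close>: there all squares are non-negative reals, \<open>\<theta>\<^sub>0\<^sub>,\<^sub>0\<^sup>2 \<ge> 1\<close>, the signed sums of the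
  \<open>\<theta>\<^sub>0\<^sub>,\<^sub>\<beta>\<^sup>2\<close> are positive, and \<open>\<theta>\<^sub>\<alpha>\<^sub>,\<^sub>0\<close> tends to \<open>0\<close> as \<open>t \<rightarrow> \<infinity>\<close> for \<open>\<alpha> \<noteq> 0\<close>.
\<close>

section \<open>Coordinates and lattices\<close>

lemma UNIV_4: "(UNIV :: 4 set) = {0, 1, 2, 3}"
proof -
  have "x = 0 \<or> x = 1 \<or> x = 2 \<or> x = 3" for x :: 4
    using exhaust_4[of x] by auto
  then show ?thesis
    by auto
qed

lemma sum_UNIV_4: "sum f (UNIV :: 4 set) = f 0 + f 1 + f 2 + f 3"
  unfolding UNIV_4 by (simp add: ac_simps)

lemma forall_4: "(\<forall>i::4. P i) \<longleftrightarrow> P 0 \<and> P 1 \<and> P 2 \<and> P 3"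
  unfolding ball_UNIV[symmetric] UNIV_4 by simp

lemma vec4_nth [simp]:
  "vec4 a b c d $ 0 = a" "vec4 a b c d $ 1 = b" "vec4 a b c d $ 2 = c" "vec4 a b c d $ 3 = d"
  by (simp_all add: vec4_def)

lemma vec_eq_4: "(x :: 'a ^ 4) = y \<longleftrightarrow> x$0 = y$0 \<and> x$1 = y$1 \<and> x$2 = y$2 \<and> x$3 = y$3"
  by (auto simp: vec_eq_iff forall_4)

lemma vec4_zero: "vec4 0 0 0 0 = 0"
  by (simp add: vec_eq_4)

lemma scaleR_vec4 [simp]: "c *\<^sub>R vec4 a0 a1 a2 a3 = vec4 (c * a0) (c * a1) (c * a2) (c * a3)"
  by (simp add: vec_eq_4)

definition BR :: "real ^ 4 \<Rightarrow> real ^ 4 \<Rightarrow> real" where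
  "BR x y = x$0 * (2*y$0 - y$1) + x$1 * (- y$0 + 2*y$1 - y$2 - y$3)
          + x$2 * (- y$1 + 2*y$2) + x$3 * (- y$1 + 2*y$3)"

definition QR :: "real ^ 4 \<Rightarrow> real" where
  "QR x = BR x x / 2"

lemma Bf_eq:
  "Bf x y = x$0 * (2*y$0 - y$1) + x$1 * (- y$0 + 2*y$1 - y$2 - y$3)
          + x$2 * (- y$1 + 2*y$2) + x$3 * (- y$1 + 2*y$3)"
  by (simp add: Bf_def Gm_def sum_UNIV_4 algebra_simps)

lemma cvec_nth [simp]: "cvec x $ i = of_real (x $ i)"
  by (simp add: cvec_def)

lemma cvec_add: "cvec (x + y) = cvec x + cvec y"
  by (simp add: vec_eq_iff)

lemma Bf_cvec: "Bf (cvec x) (cvec y) = of_real (BR x y)"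
  by (simp add: Bf_eq BR_def)

lemma Qf_cvec: "Qf (cvec x) = of_real (QR x)"
  by (simp add: Qf_def QR_def Bf_cvec)

lemma Bf_add_left: "Bf (x + y) w = Bf x w + Bf y w"
  by (simp add: Bf_eq algebra_simps)

lemma Bf_add_right: "Bf w (x + y) = Bf w x + Bf w y"
  by (simp add: Bf_eq algebra_simps)

lemma Bf_zero_right [simp]: "Bf x 0 = 0"
  by (simp add: Bf_eq)

lemma BR_commute: "BR x y = BR y x"
  by (simp add: BR_def algebra_simps)

lemma BR_add_left: "BR (x + y) w = BR x w + BR y w"
  by (simp add: BR_def algebra_simps)

lemma BR_add_right: "BR w (x + y) = BR w x + BR w y"
  by (simp add: BR_def algebra_simps)

lemma BR_scaleR_left: "BR (c *\<^sub>R x) w = c * BR x w"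
  by (simp add: BR_def algebra_simps)

lemma BR_scaleR_right: "BR w (c *\<^sub>R x) = c * BR w x"
  by (simp add: BR_def algebra_simps)

lemma BR_zero [simp]: "BR 0 w = 0" "BR w 0 = 0"
  by (simp_all add: BR_def)

lemma QR_add: "QR (x + y) = QR x + QR y + BR x y"
  by (simp add: QR_def BR_add_left BR_add_right BR_commute[of y x] field_simps)

lemma QR_parallelogram: "QR x + QR y = (QR (x + y) + QR (x - y)) / 2"
  by (simp add: QR_def BR_def field_simps)

lemma QR_ge_sum_squares: "QR x \<ge> (x$0^2 + x$1^2 + x$2^2 + x$3^2) / 10"
proof -
  define a b c d where "a = x$0" and "b = x$1" and "c = x$2" and "d = x$3"
  have "QR x - (a^2 + b^2 + c^2 + d^2) / 10
      = 3/10 * ((a - c)^2 + (a - d)^2 + (c - d)^2) + 9/10 * (b - (a + c + d) * (10/18))^2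
        + (3/10 - 10/36) * (a + c + d)^2"
    by (simp add: QR_def BR_def a_def b_def c_def d_def field_simps power2_eq_square)
  also have "\<dots> \<ge> 0"
    by (intro add_nonneg_nonneg mult_nonneg_nonneg) auto
  finally show ?thesis
    by (simp add: a_def b_def c_def d_def)
qed

lemma Lat_iff: "x \<in> Lat \<longleftrightarrow> x$0 \<in> \<int> \<and> x$1 \<in> \<int> \<and> x$2 \<in> \<int> \<and> x$3 \<in> \<int>"
  by (simp add: Lat_def forall_4)

lemma zero_in_Lat [simp]: "0 \<in> Lat"
  by (simp add: Lat_def)

lemma Lat_add: "x \<in> Lat \<Longrightarrow> y \<in> Lat \<Longrightarrow> x + y \<in> Lat"
  by (simp add: Lat_def)

lemma Lat_diff: "x \<in> Lat \<Longrightarrow> y \<in> Lat \<Longrightarrow> x - y \<in> Lat"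
  by (simp add: Lat_def)

lemma Lat_minus: "x \<in> Lat \<Longrightarrow> - x \<in> Lat"
  by (simp add: Lat_def)

lemma BR_Lat_Ints: "x \<in> Lat \<Longrightarrow> y \<in> Lat \<Longrightarrow> BR x y \<in> \<int>"
  by (simp add: Lat_iff BR_def)

lemma halfLat_double: "\<beta> \<in> halfLat \<Longrightarrow> 2 *\<^sub>R \<beta> \<in> Lat"
  by (simp add: halfLat_def Lat_def)

lemma BR_Lsharp_Ints: "h \<in> Lsharp \<Longrightarrow> l \<in> Lat \<Longrightarrow> BR h l \<in> \<int>"
  by (metis (no_types, lifting) Bf_cvec Lsharp_def mem_Collect_eq of_real_in_Ints_iff)

lemma Lsharp_iff:
  "h \<in> Lsharp \<longleftrightarrow> 2*h$0 - h$1 \<in> \<int> \<and> - h$0 + 2*h$1 - h$2 - h$3 \<in> \<int>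
                  \<and> - h$1 + 2*h$2 \<in> \<int> \<and> - h$1 + 2*h$3 \<in> \<int>"
proof
  assume h: "h \<in> Lsharp"
  have "BR h (vec4 1 0 0 0) \<in> \<int>" "BR h (vec4 0 1 0 0) \<in> \<int>"
       "BR h (vec4 0 0 1 0) \<in> \<int>" "BR h (vec4 0 0 0 1) \<in> \<int>"
    by (simp_all add: BR_Lsharp_Ints[OF h] Lat_iff)
  then show "2*h$0 - h$1 \<in> \<int> \<and> - h$0 + 2*h$1 - h$2 - h$3 \<in> \<int>
             \<and> - h$1 + 2*h$2 \<in> \<int> \<and> - h$1 + 2*h$3 \<in> \<int>"
    by (simp add: BR_def algebra_simps)
next
  assume "2*h$0 - h$1 \<in> \<int> \<and> - h$0 + 2*h$1 - h$2 - h$3 \<in> \<int>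
          \<and> - h$1 + 2*h$2 \<in> \<int> \<and> - h$1 + 2*h$3 \<in> \<int>"
  moreover have "BR h l = l$0 * (2*h$0 - h$1) + l$1 * (- h$0 + 2*h$1 - h$2 - h$3)
                        + l$2 * (- h$1 + 2*h$2) + l$3 * (- h$1 + 2*h$3)" for l
    by (simp add: BR_def algebra_simps)
  ultimately have "BR h l \<in> \<int>" if "l \<in> Lat" for l
    using that by (simp add: Lat_iff)
  then show "h \<in> Lsharp"
    by (simp add: Lsharp_def Bf_cvec)
qed

lemma zero_in_Lsharp [simp]: "0 \<in> Lsharp"
  by (simp add: Lsharp_iff)

lemma zero_in_halfLat [simp]: "0 \<in> halfLat"
  by (simp add: halfLat_def)

definition ivec :: "int \<Rightarrow> int \<Rightarrow> int \<Rightarrow> int \<Rightarrow> real ^ 4" where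
  "ivec k0 k1 k2 k3 = vec4 (of_int k0) (of_int k1) (of_int k2) (of_int k3)"

lemma ivec_in_Lat: "ivec k0 k1 k2 k3 \<in> Lat"
  by (simp add: Lat_iff ivec_def)

lemma Lat_ivecE:
  assumes "d \<in> Lat"
  obtains k0 k1 k2 k3 where "d = ivec k0 k1 k2 k3"
proof -
  from assms have "d$0 \<in> \<int>" "d$1 \<in> \<int>" "d$2 \<in> \<int>" "d$3 \<in> \<int>"
    by (simp_all add: Lat_iff)
  then obtain k0 k1 k2 k3 where "d$0 = of_int k0" "d$1 = of_int k1" "d$2 = of_int k2" "d$3 = of_int k3"
    by (metis Ints_cases)
  then show ?thesis
    using that by (simp add: ivec_def vec_eq_4)
qed

lemma halfLat_ivecE:
  assumes "\<beta> \<in> halfLat"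
  obtains k0 k1 k2 k3 where "\<beta> = (1/2) *\<^sub>R ivec k0 k1 k2 k3"
proof -
  obtain k0 k1 k2 k3 where k: "2 *\<^sub>R \<beta> = ivec k0 k1 k2 k3"
    using Lat_ivecE[OF halfLat_double[OF assms]] .
  have "\<beta> = (1/2) *\<^sub>R (2 *\<^sub>R \<beta>)"
    by simp
  then show ?thesis
    using that unfolding k by blast
qed

lemma of_int_half_in_Ints_iff: "(of_int k / 2 :: real) \<in> \<int> \<longleftrightarrow> even k"
proof
  assume "(of_int k / 2 :: real) \<in> \<int>"
  then obtain m where "of_int k / 2 = (of_int m :: real)"
    by (elim Ints_cases)
  then have "(of_int k :: real) = of_int (2 * m)"
    by (simp add: field_simps)
  then have "k = 2 * m"
    by (simp only: of_int_eq_iff)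
  then show "even k"
    by simp
qed (auto elim!: evenE)

lemma half_ivec_in_Lat_iff:
  "(1/2) *\<^sub>R ivec k0 k1 k2 k3 \<in> Lat \<longleftrightarrow> even k0 \<and> even k1 \<and> even k2 \<and> even k3"
  by (simp add: Lat_iff ivec_def of_int_half_in_Ints_iff)

lemma half_ivec_in_Lsharp_iff:
  "(1/2) *\<^sub>R ivec k0 k1 k2 k3 \<in> Lsharp \<longleftrightarrow> even k1 \<and> even (k0 + k2 + k3)"
proof -
  define h where "h = (1/2) *\<^sub>R ivec k0 k1 k2 k3"
  have "2*h$0 - h$1 = of_int (2*k0 - k1) / 2" "- h$0 + 2*h$1 - h$2 - h$3 = of_int (- k0 + 2*k1 - k2 - k3) / 2"
       "- h$1 + 2*h$2 = of_int (- k1 + 2*k2) / 2" "- h$1 + 2*h$3 = of_int (- k1 + 2*k3) / 2"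
    by (simp_all add: h_def ivec_def field_simps)
  then have "h \<in> Lsharp \<longleftrightarrow> even (2*k0 - k1) \<and> even (- k0 + 2*k1 - k2 - k3) \<and> even (- k1 + 2*k2) \<and> even (- k1 + 2*k3)"
    unfolding Lsharp_iff by (simp only: of_int_half_in_Ints_iff)
  then show ?thesis
    unfolding h_def by auto
qed

lemma half_ivec_diff:
  "(1/2) *\<^sub>R ivec a0 a1 a2 a3 - (1/2) *\<^sub>R ivec c0 c1 c2 c3 = (1/2) *\<^sub>R ivec (a0 - c0) (a1 - c1) (a2 - c2) (a3 - c3)"
  by (simp add: ivec_def vec_eq_4 algebra_simps)

lemma Lsharp_subset_halfLat:
  assumes "h \<in> Lsharp"
  shows "h \<in> halfLat"
proof -
  obtain m0 m1 m2 m3 where m: "2*h$0 - h$1 = of_int m0" "- h$0 + 2*h$1 - h$2 - h$3 = of_int m1"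
    "- h$1 + 2*h$2 = of_int m2" "- h$1 + 2*h$3 = of_int m3"
    using assms unfolding Lsharp_iff by (metis Ints_cases)
  have "2 * h$0 = of_int (2*m0 + 2*m1 + m2 + m3)" "2 * h$1 = of_int (2*m0 + 4*m1 + 2*m2 + 2*m3)"
       "2 * h$2 = of_int (m0 + 2*m1 + 2*m2 + m3)" "2 * h$3 = of_int (m0 + 2*m1 + m2 + 2*m3)"
    by (simp_all flip: m)
  then show ?thesis
    by (simp add: halfLat_def forall_4)
qed

lemma half_sum_in_Lat_ivecI:
  assumes "2 *\<^sub>R \<alpha> + v = ivec k0 k1 k2 k3" and "even k0 \<and> even k1 \<and> even k2 \<and> even k3"
  shows "\<alpha> + (1/2) *\<^sub>R v \<in> Lat"
proof -
  have "\<alpha> + (1/2) *\<^sub>R v = (1/2) *\<^sub>R (2 *\<^sub>R \<alpha> + v)"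
    by (simp add: algebra_simps)
  then show ?thesis
    using assms by (simp add: half_ivec_in_Lat_iff)
qed

definition a1 :: "real ^ 4" where "a1 = vec4 0 0 (1/2) (1/2)"

definition a2 :: "real ^ 4" where "a2 = vec4 (1/2) 0 0 (1/2)"

definition a3 :: "real ^ 4" where "a3 = vec4 (1/2) 0 (1/2) 0"

definition b1 :: "real ^ 4" where "b1 = vec4 (1/2) (1/2) (1/2) (1/2)"

definition b2 :: "real ^ 4" where "b2 = vec4 (1/2) 0 0 0"

definition b3 :: "real ^ 4" where "b3 = vec4 0 (1/2) 0 0"

lemma Aset_eq: "Aset = {0, a1, a2, a3}"
  by (simp add: Aset_def a1_def a2_def a3_def vec4_zero)

lemma Bset_eq: "Bset = {0, b1, b2, b3}"
  by (simp add: Bset_def b1_def b2_def b3_def vec4_zero)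

lemma Bset_minus_zero: "Bset - {0} = {b1, b2, b3}"
  by (auto simp: Bset_eq b1_def b2_def b3_def vec_eq_4)

lemma sum_Aset: "(\<Sum>\<alpha>\<in>Aset. f \<alpha>) = f 0 + f a1 + f a2 + f a3"
  by (simp add: Aset_eq a1_def a2_def a3_def vec_eq_4 add.assoc)

lemma sum_Bset: "(\<Sum>\<beta>\<in>Bset. f \<beta>) = f 0 + f b1 + f b2 + f b3"
  by (simp add: Bset_eq b1_def b2_def b3_def vec_eq_4 add.assoc)

lemma sum_Bset_minus_zero: "(\<Sum>\<beta>\<in>Bset - {0}. f \<beta>) = f b1 + f b2 + f b3"
  by (simp add: Bset_minus_zero b1_def b2_def b3_def vec_eq_4 add.assoc)

lemma Aset_subset_Lsharp: "a \<in> Aset \<Longrightarrow> a \<in> Lsharp"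
  by (auto simp: Aset_eq a1_def a2_def a3_def Lsharp_iff)

lemma Bset_subset_halfLat: "b \<in> Bset \<Longrightarrow> b \<in> halfLat"
  by (auto simp: Bset_eq b1_def b2_def b3_def halfLat_def forall_4)

lemma Aset_in_Lsharp: "a1 \<in> Lsharp" "a2 \<in> Lsharp" "a3 \<in> Lsharp"
  by (simp_all add: Aset_subset_Lsharp Aset_eq)

lemma Bset_in_halfLat: "b1 \<in> halfLat" "b2 \<in> halfLat" "b3 \<in> halfLat"
  by (simp_all add: Bset_subset_halfLat Bset_eq)

lemma Lsharp_Aset_rep:
  assumes "\<alpha> \<in> Lsharp"
  obtains a where "a \<in> Aset" and "\<alpha> - a \<in> Lat"
proof -
  obtain k0 k1 k2 k3 where \<alpha>: "\<alpha> = (1/2) *\<^sub>R ivec k0 k1 k2 k3"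
    using halfLat_ivecE[OF Lsharp_subset_halfLat[OF assms]] .
  have parity: "even k1" "even (k0 + k2 + k3)"
    using assms by (simp_all add: \<alpha> half_ivec_in_Lsharp_iff)
  have Aset: "Aset = {(1/2) *\<^sub>R ivec 0 0 0 0, (1/2) *\<^sub>R ivec 0 0 1 1,
                      (1/2) *\<^sub>R ivec 1 0 0 1, (1/2) *\<^sub>R ivec 1 0 1 0}"
    by (simp add: Aset_def ivec_def)
  have "\<exists>a\<in>Aset. \<alpha> - a \<in> Lat"
    using parity unfolding Aset \<alpha> by (simp add: half_ivec_diff half_ivec_in_Lat_iff) auto
  then show ?thesis
    using that by blast
qed

lemma halfLat_Bset_rep:
  assumes "\<beta> \<in> halfLat"
  obtains b where "b \<in> Bset" and "\<beta> - b \<in> Lsharp"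
proof -
  obtain n0 n1 n2 n3 where \<beta>: "\<beta> = (1/2) *\<^sub>R ivec n0 n1 n2 n3"
    using halfLat_ivecE[OF assms] .
  have Bset: "Bset = {(1/2) *\<^sub>R ivec 0 0 0 0, (1/2) *\<^sub>R ivec 1 1 1 1,
                      (1/2) *\<^sub>R ivec 1 0 0 0, (1/2) *\<^sub>R ivec 0 1 0 0}"
    by (simp add: Bset_def ivec_def)
  have "\<exists>b\<in>Bset. \<beta> - b \<in> Lsharp"
    unfolding Bset \<beta> by (simp add: half_ivec_diff half_ivec_in_Lsharp_iff) auto
  then show ?thesis
    using that by blast
qed

section \<open>Characters\<close>

lemma e_add: "e (x + y) = e x * e y"
  by (simp add: e_def algebra_simps flip: exp_add)

lemma e_zero [simp]: "e 0 = 1"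
  by (simp add: e_def)

lemma e_nonzero [simp]: "e x \<noteq> 0"
  by (simp add: e_def)

lemma e_Ints: "x \<in> \<int> \<Longrightarrow> e x = 1"
  by (elim Ints_cases) (simp add: e_def mult.commute mult.left_commute)

lemma norm_e: "norm (e x) = exp (- 2 * pi * Im x)"
  by (simp add: e_def)

lemma e_half_of_int: "e (of_int n / 2) = (if even n then 1 else -1)"
proof (cases "even n")
  case True
  then obtain k where "n = 2 * k" by (elim evenE)
  then show ?thesis by (simp add: e_Ints)
next
  case False
  then obtain k where "n = 2 * k + 1" by (elim oddE)
  then have "of_int n / 2 = of_int k + (1/2 :: complex)" by simp
  moreover have "e (1/2) = -1" by (simp add: e_def mult.commute)
  ultimately show ?thesis
    using False by (simp only: e_add e_Ints[OF Ints_of_int]) simp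
qed

definition chi :: "real ^ 4 \<Rightarrow> real ^ 4 \<Rightarrow> complex" where
  "chi \<beta> v = e (of_real (BR \<beta> v))"

lemma chi_add: "chi \<beta> (v + w) = chi \<beta> v * chi \<beta> w"
  by (simp add: chi_def BR_add_right e_add)

lemma chi_add_left: "chi (\<beta> + \<gamma>) v = chi \<beta> v * chi \<gamma> v"
  by (simp add: chi_def BR_add_left e_add)

lemma chi_diff: "chi \<beta> (u - l) = chi \<beta> u * chi \<beta> (- l)"
  by (metis chi_add diff_conv_add_uminus)

lemma chi_zero_left [simp]: "chi 0 v = 1"
  by (simp add: chi_def)

lemma norm_chi [simp]: "norm (chi \<beta> v) = 1"
  by (simp add: chi_def norm_e)

lemma chi_halfLat_cases: "\<beta> \<in> halfLat \<Longrightarrow> v \<in> Lat \<Longrightarrow> chi \<beta> v = 1 \<or> chi \<beta> v = -1"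
proof -
  assume "\<beta> \<in> halfLat" "v \<in> Lat"
  then have "BR (2 *\<^sub>R \<beta>) v \<in> \<int>"
    by (intro BR_Lat_Ints halfLat_double)
  then obtain n where "2 * BR \<beta> v = of_int n"
    by (metis BR_scaleR_left Ints_cases)
  then have half: "BR \<beta> v = of_int n / 2"
    by simp
  show ?thesis
    unfolding chi_def half using e_half_of_int[of n] by simp
qed

lemma chi_halfLat_double: "\<beta> \<in> halfLat \<Longrightarrow> v \<in> Lat \<Longrightarrow> chi \<beta> (2 *\<^sub>R v) = 1"
  unfolding scaleR_2 chi_add using chi_halfLat_cases[of \<beta> v] by auto

lemma chi_Lsharp_eq_one: "h \<in> Lsharp \<Longrightarrow> v \<in> Lat \<Longrightarrow> chi h v = 1"
  by (simp add: chi_def BR_Lsharp_Ints e_Ints)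

lemma chi_eq_minus_one_iff:
  assumes "BR \<beta> v = of_int n / 2"
  shows "chi \<beta> v = -1 \<longleftrightarrow> odd n"
  unfolding chi_def assms using e_half_of_int[of n] by simp

lemma chi_b1_ivec: "chi b1 (ivec x0 x1 x2 x3) = -1 \<longleftrightarrow> odd (x0 - x1 + x2 + x3)"
  by (rule chi_eq_minus_one_iff) (simp add: BR_def b1_def ivec_def field_simps)

lemma chi_b2_ivec: "chi b2 (ivec x0 x1 x2 x3) = -1 \<longleftrightarrow> odd (2*x0 - x1)"
  by (rule chi_eq_minus_one_iff) (simp add: BR_def b2_def ivec_def field_simps)

lemma chi_b3_ivec: "chi b3 (ivec x0 x1 x2 x3) = -1 \<longleftrightarrow> odd (- x0 + 2*x1 - x2 - x3)"
  by (rule chi_eq_minus_one_iff) (simp add: BR_def b3_def ivec_def field_simps)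

lemma chi_b1_eq_mult: "u \<in> Lat \<Longrightarrow> chi b1 u = chi b2 u * chi b3 u"
proof -
  assume u: "u \<in> Lat"
  have "b2 + b3 = b1 + vec4 0 0 (-1/2) (-1/2)"
    by (simp add: b1_def b2_def b3_def vec_eq_4)
  moreover have "vec4 0 0 (-1/2) (-1/2) \<in> Lsharp"
    by (simp add: Lsharp_iff)
  ultimately show ?thesis
    using chi_Lsharp_eq_one[OF _ u] by (metis chi_add_left mult_1_right)
qed

lemma Lat_chi_b2_b3_exists:
  assumes "s2 \<in> {1, -1}" and "s3 \<in> {1, -1}"
  obtains u where "u \<in> Lat" and "chi b2 u = s2" and "chi b3 u = s3"
proof -
  have "chi b2 (ivec x0 x1 0 0) = (if odd x1 then -1 else 1)"
       "chi b3 (ivec x0 x1 0 0) = (if odd x0 then -1 else 1)" for x0 x1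
    using chi_halfLat_cases[OF Bset_in_halfLat(2) ivec_in_Lat, of x0 x1 0 0]
      chi_halfLat_cases[OF Bset_in_halfLat(3) ivec_in_Lat, of x0 x1 0 0]
    by (auto simp: chi_b2_ivec chi_b3_ivec)
  then show ?thesis
    using that[OF ivec_in_Lat, of "if s3 = 1 then 0 else 1" "if s2 = 1 then 0 else 1" 0 0] assms
    by auto
qed

text \<open>Since \<open>\<chi>\<^sub>b\<^sub>1 = \<chi>\<^sub>b\<^sub>2 \<chi>\<^sub>b\<^sub>3\<close> on the lattice, the weight factors as \<open>(1 + s\<^sub>2\<chi>\<^sub>b\<^sub>2)(1 + s\<^sub>3\<chi>\<^sub>b\<^sub>3)\<close>.\<close>
lemma chi_signed_weight_cases:
  assumes "s2 \<in> {1, -1}" and "s3 \<in> {1, -1}" and "u \<in> Lat"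
  shows "1 + s2 * s3 * chi b1 u + s2 * chi b2 u + s3 * chi b3 u \<in> {0, 4}"
proof -
  have "1 + s2 * s3 * chi b1 u + s2 * chi b2 u + s3 * chi b3 u = (1 + s2 * chi b2 u) * (1 + s3 * chi b3 u)"
    using chi_b1_eq_mult[OF assms(3)] by (simp add: algebra_simps)
  moreover have "1 + s2 * chi b2 u \<in> {0, 2}" and "1 + s3 * chi b3 u \<in> {0, 2}"
    using assms chi_halfLat_cases[OF Bset_in_halfLat(2) assms(3)] chi_halfLat_cases[OF Bset_in_halfLat(3) assms(3)]
    by auto
  ultimately show ?thesis
    by auto
qed

section \<open>Convergence\<close>

lemma summable_on_exp_neg_abs_Ints: "(\<lambda>n::real. exp (- \<bar>n\<bar>)) summable_on \<int>"
proof -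
  have "summable (\<lambda>n. exp (-1::real) ^ n)"
    by (rule summable_geometric) simp
  then have geom: "(\<lambda>n::nat. exp (- real n)) summable_on UNIV"
    by (intro summable_nonneg_imp_summable_on) (simp_all add: exp_of_nat_mult[symmetric])
  have nonneg: "(\<lambda>n::real. exp (- \<bar>n\<bar>)) summable_on range of_nat"
    and nonpos: "(\<lambda>n::real. exp (- \<bar>n\<bar>)) summable_on range (\<lambda>n. - of_nat n)"
    by (subst summable_on_reindex; use geom in \<open>simp add: inj_on_def o_def\<close>)+
  have "\<int> = range (of_nat :: nat \<Rightarrow> real) \<union> range (\<lambda>n. - of_nat n)"
  proof (intro equalityI subsetI)
    fix x :: real assume "x \<in> \<int>"
    then obtain k where "x = of_int k" by (elim Ints_cases)
    then show "x \<in> range of_nat \<union> range (\<lambda>n. - of_nat n)"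
      by (cases "k \<ge> 0") (auto intro!: image_eqI[of _ _ "nat \<bar>k\<bar>"])
  qed auto
  then show ?thesis
    using summable_on_union[OF nonneg nonpos] by simp
qed

lemma summable_on_Lat_prod_exp: "(\<lambda>v. \<Prod>i\<in>UNIV. exp (- \<bar>v$i\<bar>)) summable_on Lat"
proof -
  have "Infinite_Set_Sum.abs_summable_on (\<lambda>n::real. exp (- \<bar>n\<bar>)) \<int>"
    using summable_on_exp_neg_abs_Ints abs_summable_equivalent[of "\<lambda>n::real. exp (- \<bar>n\<bar>)"] by simp
  moreover have "countable (\<int> :: real set)"
    by (simp add: Ints_def)
  ultimately have "Infinite_Set_Sum.abs_summable_on
                     (\<lambda>g. \<Prod>i\<in>(UNIV :: 4 set). exp (- \<bar>g i\<bar>)) (PiE UNIV (\<lambda>_. \<int> :: real set))"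
    using abs_summable_on_prod_PiE[of "UNIV :: 4 set" "\<lambda>_. \<int>" "\<lambda>_ n::real. exp (- \<bar>n\<bar>)"] by simp
  then have prod: "(\<lambda>g. \<Prod>i\<in>(UNIV :: 4 set). exp (- \<bar>g i\<bar>)) summable_on PiE UNIV (\<lambda>_. \<int> :: real set)"
    by (simp add: abs_prod flip: abs_summable_equivalent)
  have Lat_eq: "Lat = vec_lambda ` PiE UNIV (\<lambda>_. \<int>)"
  proof (intro equalityI subsetI)
    fix v assume "v \<in> Lat"
    then show "v \<in> vec_lambda ` PiE UNIV (\<lambda>_. \<int>)"
      by (intro image_eqI[of _ _ "vec_nth v"]) (auto simp: Lat_def)
  qed (auto simp: Lat_def)
  have inj: "inj_on vec_lambda (PiE UNIV (\<lambda>_. \<int> :: real set))"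
    by (simp add: inj_on_def vec_lambda_inject)
  show ?thesis
    unfolding Lat_eq summable_on_reindex[OF inj] o_def using prod by simp
qed

lemma quadratic_minus_linear_ge:
  fixes a b s :: real
  assumes "a > 0"
  shows "a * s^2 - b * \<bar>s\<bar> \<ge> - (b^2 / (4*a))"
proof -
  have "0 \<le> a * (\<bar>s\<bar> - b / (2*a))^2"
    using assms by simp
  also have "\<dots> = a * \<bar>s\<bar>^2 - b * \<bar>s\<bar> + b^2 / (4*a)"
    using assms by (simp add: power2_eq_square field_simps)
  finally show ?thesis
    by simp
qed

lemma abs_BR_le:
  "\<bar>BR x w\<bar> \<le> 2 * (\<bar>w$0\<bar> + \<bar>w$1\<bar> + \<bar>w$2\<bar> + \<bar>w$3\<bar>) * (\<bar>x$0\<bar> + \<bar>x$1\<bar> + \<bar>x$2\<bar> + \<bar>x$3\<bar>)"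
proof -
  define W where "W = \<bar>w$0\<bar> + \<bar>w$1\<bar> + \<bar>w$2\<bar> + \<bar>w$3\<bar>"
  have summand: "\<bar>x$i * r\<bar> \<le> \<bar>x$i\<bar> * (2 * W)" if "\<bar>r\<bar> \<le> 2 * W" for i r
    using that by (simp add: abs_mult mult_left_mono)
  have rows: "\<bar>2*w$0 - w$1\<bar> \<le> 2 * W" "\<bar>- w$0 + 2*w$1 - w$2 - w$3\<bar> \<le> 2 * W"
       "\<bar>- w$1 + 2*w$2\<bar> \<le> 2 * W" "\<bar>- w$1 + 2*w$3\<bar> \<le> 2 * W"
    unfolding W_def by (smt (verit))+
  have "2 * W * (\<bar>x$0\<bar> + \<bar>x$1\<bar> + \<bar>x$2\<bar> + \<bar>x$3\<bar>)
        = \<bar>x$0\<bar> * (2 * W) + \<bar>x$1\<bar> * (2 * W) + \<bar>x$2\<bar> * (2 * W) + \<bar>x$3\<bar> * (2 * W)"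
    by (simp add: algebra_simps)
  then show ?thesis
    using summand[OF rows(1), of 0] summand[OF rows(2), of 1] summand[OF rows(3), of 2]
      summand[OF rows(4), of 3]
    unfolding BR_def W_def[symmetric] by linarith
qed

lemma gauss_exponent_ge:
  assumes "t > 0"
  obtains C where "\<And>x. 2*pi*(t * QR x + BR x w) \<ge> (\<bar>x$0\<bar> + \<bar>x$1\<bar> + \<bar>x$2\<bar> + \<bar>x$3\<bar>) - C"
proof
  define W where "W = \<bar>w$0\<bar> + \<bar>w$1\<bar> + \<bar>w$2\<bar> + \<bar>w$3\<bar>"
  define a b where "a = pi * t / 5" and "b = 4 * pi * W + 1"
  have a: "a > 0"
    using assms by (simp add: a_def)
  fix x :: "real ^ 4"
  define S where "S = \<bar>x$0\<bar> + \<bar>x$1\<bar> + \<bar>x$2\<bar> + \<bar>x$3\<bar>"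
  have q: "a * (x$i)^2 - b * \<bar>x$i\<bar> \<ge> - (b^2 / (4*a))" for i
    by (rule quadratic_minus_linear_ge[OF a])
  have "t * ((x$0^2 + x$1^2 + x$2^2 + x$3^2) / 10) \<le> t * QR x"
    using QR_ge_sum_squares[of x] assms by (intro mult_left_mono) auto
  moreover have "- (2 * W * S) \<le> BR x w"
    using abs_BR_le[of x w] by (simp add: W_def S_def abs_le_iff)
  ultimately have "2*pi*(t * ((x$0^2 + x$1^2 + x$2^2 + x$3^2) / 10) - 2 * W * S) \<le> 2*pi*(t * QR x + BR x w)"
    by (intro mult_left_mono) simp_all
  moreover have "2*pi*(t * ((x$0^2 + x$1^2 + x$2^2 + x$3^2) / 10) - 2 * W * S)
      = (a * (x$0)^2 - b * \<bar>x$0\<bar>) + (a * (x$1)^2 - b * \<bar>x$1\<bar>)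
        + (a * (x$2)^2 - b * \<bar>x$2\<bar>) + (a * (x$3)^2 - b * \<bar>x$3\<bar>) + S"
    by (simp add: a_def b_def S_def algebra_simps)
  ultimately show "2*pi*(t * QR x + BR x w) \<ge> S - 4 * (b^2 / (4*a))"
    using q[of 0] q[of 1] q[of 2] q[of 3] by linarith
qed

lemma summable_on_gauss_Lat:
  assumes "t > 0"
  shows "(\<lambda>v. exp (- 2*pi*(t * QR (p + v) + BR (p + v) w))) summable_on Lat"
proof -
  obtain C where C: "\<And>x. 2*pi*(t * QR x + BR x w) \<ge> (\<bar>x$0\<bar> + \<bar>x$1\<bar> + \<bar>x$2\<bar> + \<bar>x$3\<bar>) - C"
    using gauss_exponent_ge[OF assms] by blast
  define D where "D = C + \<bar>p$0\<bar> + \<bar>p$1\<bar> + \<bar>p$2\<bar> + \<bar>p$3\<bar>"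
  have "exp (- 2*pi*(t * QR (p + v) + BR (p + v) w)) \<le> exp D * (\<Prod>i\<in>UNIV. exp (- \<bar>v$i\<bar>))" for v
  proof -
    have tri: "\<bar>v$i\<bar> \<le> \<bar>(p + v)$i\<bar> + \<bar>p$i\<bar>" for i
      by simp
    have "- 2*pi*(t * QR (p + v) + BR (p + v) w) \<le> D + - (\<bar>v$0\<bar> + \<bar>v$1\<bar> + \<bar>v$2\<bar> + \<bar>v$3\<bar>)"
      using C[of "p + v"] tri[of 0] tri[of 1] tri[of 2] tri[of 3] unfolding D_def by linarith
    moreover have "(\<Prod>i\<in>UNIV. exp (- \<bar>v$i\<bar>)) = exp (- (\<bar>v$0\<bar> + \<bar>v$1\<bar> + \<bar>v$2\<bar> + \<bar>v$3\<bar>))"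
      by (simp add: sum_UNIV_4 flip: exp_sum)
    ultimately show ?thesis
      by (simp flip: exp_add)
  qed
  then show ?thesis
    by (intro summable_on_comparison_test[OF summable_on_cmult_right[OF summable_on_Lat_prod_exp]]) auto
qed

definition gauss :: "complex \<Rightarrow> complex ^ 4 \<Rightarrow> real ^ 4 \<Rightarrow> complex" where
  "gauss \<tau> z x = e (\<tau> * of_real (QR x) + Bf (cvec x) z)"

lemma theta_eq_infsum: "theta \<alpha> \<beta> \<tau> z = (\<Sum>\<^sub>\<infinity>v\<in>Lat. chi \<beta> v * gauss \<tau> z (\<alpha> + v))"
  by (simp add: theta_def chi_def gauss_def Bf_cvec Qf_cvec)

lemma norm_gauss: "norm (gauss \<tau> z x) = exp (- 2*pi*(Im \<tau> * QR x + BR x (\<chi> i. Im (z$i))))"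
  by (simp add: gauss_def norm_e Bf_eq BR_def)

lemma abs_summable_on_theta_terms:
  "Im \<tau> > 0 \<Longrightarrow> (\<lambda>v. norm (chi \<beta> v * gauss \<tau> z (\<alpha> + v))) summable_on Lat"
  using summable_on_gauss_Lat[of "Im \<tau>" \<alpha> "\<chi> i. Im (z$i)"] by (simp add: norm_mult norm_gauss)

lemma summable_on_theta_terms:
  assumes "Im \<tau> > 0"
  shows "(\<lambda>v. chi \<beta> v * gauss \<tau> z (\<alpha> + v)) summable_on Lat"
  using abs_summable_on_theta_terms[OF assms] by (rule abs_summable_summable)

section \<open>The identity\<close>

lemma infsum_mult_infsum:
  fixes f :: "'a \<Rightarrow> 'c::{banach, real_normed_div_algebra}" and g :: "'b \<Rightarrow> 'c"
  assumes f: "(\<lambda>x. norm (f x)) summable_on A" and g: "(\<lambda>y. norm (g y)) summable_on B"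
  shows "(\<lambda>(x, y). f x * g y) summable_on A \<times> B"
    and "infsum f A * infsum g B = (\<Sum>\<^sub>\<infinity>(x, y)\<in>A \<times> B. f x * g y)"
proof -
  have "(\<lambda>p. norm ((\<lambda>(x, y). f x * g y) p)) summable_on A \<times> B"
  proof (subst Infinite_Sum.abs_summable_on_Sigma_iff, intro conjI ballI)
    show "(\<lambda>y. norm ((\<lambda>(x, y). f x * g y) (x, y))) summable_on B" for x
      using summable_on_cmult_right[OF g, of "norm (f x)"] by (simp add: norm_mult)
    show "(\<lambda>x. norm (\<Sum>\<^sub>\<infinity>y\<in>B. norm ((\<lambda>(x, y). f x * g y) (x, y)))) summable_on A"
      using summable_on_cmult_left[OF f, of "\<Sum>\<^sub>\<infinity>y\<in>B. norm (g y)"]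
      by (simp add: norm_mult infsum_cmult_right' infsum_nonneg)
  qed
  then show summable: "(\<lambda>(x, y). f x * g y) summable_on A \<times> B"
    by (rule abs_summable_summable)
  have "(\<Sum>\<^sub>\<infinity>(x, y)\<in>A \<times> B. f x * g y) = (\<Sum>\<^sub>\<infinity>x\<in>A. \<Sum>\<^sub>\<infinity>y\<in>B. f x * g y)"
    using infsum_Sigma_banach[OF summable] by simp
  also have "\<dots> = infsum f A * infsum g B"
    by (simp add: infsum_cmult_right' infsum_cmult_left')
  finally show "infsum f A * infsum g B = (\<Sum>\<^sub>\<infinity>(x, y)\<in>A \<times> B. f x * g y)"
    by simp
qed

lemma infsum_diff:
  fixes f g :: "'a \<Rightarrow> 'b::{topological_ab_group_add, t2_space}"
  assumes "f summable_on A" and "g summable_on A"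
  shows "infsum (\<lambda>x. f x - g x) A = infsum f A - infsum g A"
  using infsum_add[OF assms(1) summable_on_uminus[THEN iffD2, OF assms(2)]] by (simp add: infsum_uminus)

definition odd_pairs :: "real ^ 4 \<Rightarrow> ((real ^ 4) \<times> (real ^ 4)) set" where
  "odd_pairs \<beta> = {(v, w). v \<in> Lat \<and> w \<in> Lat \<and> chi \<beta> (v + w) = -1}"

definition pair_term :: "complex \<Rightarrow> complex ^ 4 \<Rightarrow> real ^ 4 \<Rightarrow> (real ^ 4) \<times> (real ^ 4) \<Rightarrow> complex" where
  "pair_term \<tau> z \<alpha> = (\<lambda>(v, w). gauss \<tau> z (\<alpha> + v) * gauss \<tau> z (\<alpha> + w))"

lemma theta_square_eq_infsum:
  assumes "Im \<tau> > 0"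
  shows "(\<lambda>(v, w). chi \<beta> (v + w) * pair_term \<tau> z \<alpha> (v, w)) summable_on Lat \<times> Lat"
    and "(theta \<alpha> \<beta> \<tau> z)^2 = (\<Sum>\<^sub>\<infinity>(v, w)\<in>Lat \<times> Lat. chi \<beta> (v + w) * pair_term \<tau> z \<alpha> (v, w))"
proof -
  have terms: "(\<lambda>(v, w). (chi \<beta> v * gauss \<tau> z (\<alpha> + v)) * (chi \<beta> w * gauss \<tau> z (\<alpha> + w)))
             = (\<lambda>(v, w). chi \<beta> (v + w) * pair_term \<tau> z \<alpha> (v, w))"
    by (auto simp: fun_eq_iff pair_term_def chi_add)
  note summable = abs_summable_on_theta_terms[OF assms, where \<beta> = \<beta> and z = z and \<alpha> = \<alpha>]
  show "(\<lambda>(v, w). chi \<beta> (v + w) * pair_term \<tau> z \<alpha> (v, w)) summable_on Lat \<times> Lat"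
    using infsum_mult_infsum(1)[OF summable summable] unfolding terms .
  show "(theta \<alpha> \<beta> \<tau> z)^2 = (\<Sum>\<^sub>\<infinity>(v, w)\<in>Lat \<times> Lat. chi \<beta> (v + w) * pair_term \<tau> z \<alpha> (v, w))"
    using infsum_mult_infsum(2)[OF summable summable] unfolding terms theta_eq_infsum power2_eq_square .
qed

lemma theta_square_diff:
  assumes "Im \<tau> > 0" and "\<beta> \<in> halfLat"
  shows "(theta \<alpha> \<beta> \<tau> z)^2 - (theta \<alpha> 0 \<tau> z)^2 = -2 * infsum (pair_term \<tau> z \<alpha>) (odd_pairs \<beta>)"
proof -
  let ?f = "\<lambda>\<gamma>. \<lambda>(v, w). chi \<gamma> (v + w) * pair_term \<tau> z \<alpha> (v, w)"
  have "(theta \<alpha> \<beta> \<tau> z)^2 - (theta \<alpha> 0 \<tau> z)^2 = infsum (?f \<beta>) (Lat \<times> Lat) - infsum (?f 0) (Lat \<times> Lat)"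
    by (simp only: theta_square_eq_infsum(2)[OF assms(1)])
  also have "\<dots> = (\<Sum>\<^sub>\<infinity>p\<in>Lat \<times> Lat. ?f \<beta> p - ?f 0 p)"
    by (intro infsum_diff[symmetric] theta_square_eq_infsum(1)[OF assms(1)])
  also have "\<dots> = (\<Sum>\<^sub>\<infinity>p\<in>odd_pairs \<beta>. -2 * pair_term \<tau> z \<alpha> p)"
  proof (rule infsum_cong_neutral)
    fix p assume "p \<in> Lat \<times> Lat - odd_pairs \<beta>"
    then obtain v w where p: "p = (v, w)" and v: "v \<in> Lat" and w: "w \<in> Lat"
      and even: "chi \<beta> (v + w) \<noteq> -1"
      by (auto simp: odd_pairs_def)
    then have "chi \<beta> (v + w) = 1"
      using chi_halfLat_cases[OF assms(2) Lat_add[OF v w]] by simp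
    then show "?f \<beta> p - ?f 0 p = 0"
      by (simp add: p)
  qed (auto simp: odd_pairs_def)
  also have "\<dots> = -2 * infsum (pair_term \<tau> z \<alpha>) (odd_pairs \<beta>)"
    by (rule infsum_cmult_right')
  finally show ?thesis .
qed

definition twist :: "(real ^ 4 \<Rightarrow> real ^ 4) \<Rightarrow> (real ^ 4) \<times> (real ^ 4) \<Rightarrow> (real ^ 4) \<times> (real ^ 4)" where
  "twist M = (\<lambda>(x, y). ((1/2) *\<^sub>R (x + y + M (x - y)), (1/2) *\<^sub>R (x + y - M (x - y))))"

lemma twist_eq: "twist M (x, y) = (y + (1/2) *\<^sub>R (x - y + M (x - y)), y + (1/2) *\<^sub>R (x - y - M (x - y)))"
  by (simp add: twist_def vec_eq_iff field_simps)

lemma twist_twist: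
  assumes "\<And>d. M (M d) = d"
  shows "twist M (twist M p) = p"
proof -
  obtain x y where p: "p = (x, y)"
    by fastforce
  have "(1/2) *\<^sub>R (x + y + M (x - y)) - (1/2) *\<^sub>R (x + y - M (x - y)) = M (x - y)"
    by (simp add: vec_eq_iff field_simps)
  then show ?thesis
    by (simp add: p twist_def assms vec_eq_iff field_simps)
qed

lemma gauss_mult: "gauss \<tau> z x * gauss \<tau> z y
    = e (\<tau> * of_real ((QR (x + y) + QR (x - y)) / 2) + Bf (cvec (x + y)) z)"
  unfolding QR_parallelogram[symmetric]
  by (simp add: gauss_def cvec_add Bf_add_left algebra_simps flip: e_add)

lemma gauss_mult_twist:
  assumes "\<And>d. QR (M d) = QR d"
  shows "(case twist M (x, y) of (x', y') \<Rightarrow> gauss \<tau> z x' * gauss \<tau> z y') = gauss \<tau> z x * gauss \<tau> z y"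
proof -
  have "(1/2) *\<^sub>R (x + y + M (x - y)) + (1/2) *\<^sub>R (x + y - M (x - y)) = x + y"
       "(1/2) *\<^sub>R (x + y + M (x - y)) - (1/2) *\<^sub>R (x + y - M (x - y)) = M (x - y)"
    by (simp_all add: vec_eq_iff field_simps)
  then show ?thesis
    by (simp add: twist_def gauss_mult assms)
qed

context
  fixes M :: "real ^ 4 \<Rightarrow> real ^ 4" and \<alpha> \<beta> :: "real ^ 4"
  assumes double_\<alpha>: "2 *\<^sub>R \<alpha> \<in> Lat" and \<beta>: "\<beta> \<in> halfLat" and chi_double_\<alpha>: "chi \<beta> (2 *\<^sub>R \<alpha>) = 1"
    and parity: "\<And>d. d \<in> Lat \<Longrightarrow> chi \<beta> d = -1 \<Longrightarrow> \<alpha> + (1/2) *\<^sub>R (d + M d) \<in> Lat"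
begin

lemma odd_pairs_twist_certificate:
  assumes "(v, w) \<in> odd_pairs \<beta>"
  shows "\<alpha> + (1/2) *\<^sub>R (v - w + M (v - w)) \<in> Lat" and "M (v - w) \<in> Lat"
proof -
  from assms have v: "v \<in> Lat" and w: "w \<in> Lat" and vw: "chi \<beta> (v + w) = -1"
    by (auto simp: odd_pairs_def)
  have d: "v - w \<in> Lat"
    using v w by (rule Lat_diff)
  have "v + w = (v - w) + 2 *\<^sub>R w"
    by (simp add: scaleR_2)
  then have "chi \<beta> (v + w) = chi \<beta> (v - w) * chi \<beta> (2 *\<^sub>R w)"
    by (simp only: chi_add)
  then have "chi \<beta> (v - w) = -1"
    using vw chi_halfLat_double[OF \<beta> w] by simp
  then show c: "\<alpha> + (1/2) *\<^sub>R (v - w + M (v - w)) \<in> Lat"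
    by (rule parity[OF d])
  have "M (v - w) = 2 *\<^sub>R (\<alpha> + (1/2) *\<^sub>R (v - w + M (v - w))) - 2 *\<^sub>R \<alpha> - (v - w)"
    by (simp add: vec_eq_iff field_simps)
  then show "M (v - w) \<in> Lat"
    using c d double_\<alpha> by (metis Lat_add Lat_diff scaleR_2)
qed

lemma twist_shift_in_odd_pairs:
  assumes "p \<in> odd_pairs \<beta>"
  shows "twist M (p + (\<alpha>, \<alpha>)) \<in> odd_pairs \<beta>"
proof -
  obtain v w where vw: "p = (v, w)" "v \<in> Lat" "w \<in> Lat" "chi \<beta> (v + w) = -1"
    using assms by (auto simp: odd_pairs_def)
  define c where "c = \<alpha> + (1/2) *\<^sub>R (v - w + M (v - w))"
  have c: "c \<in> Lat" and Md: "M (v - w) \<in> Lat"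
    using odd_pairs_twist_certificate assms vw by (simp_all add: c_def)
  have twist: "twist M (p + (\<alpha>, \<alpha>)) = (w + c, w + c - M (v - w))"
    by (simp add: vw twist_eq c_def vec_eq_iff field_simps)
  have "(w + c) + (w + c - M (v - w)) = 2 *\<^sub>R \<alpha> + (v + w)"
    by (simp add: c_def vec_eq_iff field_simps)
  then have "chi \<beta> ((w + c) + (w + c - M (v - w))) = -1"
    by (simp only: chi_add[of \<beta> "2 *\<^sub>R \<alpha>"] chi_double_\<alpha> vw(4)) simp
  then show ?thesis
    unfolding twist odd_pairs_def mem_Collect_eq prod.case
    using Lat_add[OF vw(3) c] Lat_diff[OF Lat_add[OF vw(3) c] Md] by blast
qed

lemma twist_unshift_in_odd_pairs:
  assumes "q \<in> odd_pairs \<beta>"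
  shows "twist M q - (\<alpha>, \<alpha>) \<in> odd_pairs \<beta>"
proof -
  obtain v w where vw: "q = (v, w)" "v \<in> Lat" "w \<in> Lat" "chi \<beta> (v + w) = -1"
    using assms by (auto simp: odd_pairs_def)
  define c where "c = \<alpha> + (1/2) *\<^sub>R (v - w + M (v - w))"
  have c: "c \<in> Lat" and Md: "M (v - w) \<in> Lat"
    using odd_pairs_twist_certificate assms vw by (simp_all add: c_def)
  have first: "w + c - 2 *\<^sub>R \<alpha> \<in> Lat"
    using Lat_diff[OF Lat_add[OF vw(3) c] double_\<alpha>] .
  have twist: "twist M q - (\<alpha>, \<alpha>) = (w + c - 2 *\<^sub>R \<alpha>, w + c - 2 *\<^sub>R \<alpha> - M (v - w))"
    by (simp add: vw twist_eq c_def vec_eq_iff field_simps)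
  have "2 *\<^sub>R \<alpha> + ((w + c - 2 *\<^sub>R \<alpha>) + (w + c - 2 *\<^sub>R \<alpha> - M (v - w))) = v + w"
    by (simp add: c_def vec_eq_iff field_simps)
  then have "chi \<beta> ((w + c - 2 *\<^sub>R \<alpha>) + (w + c - 2 *\<^sub>R \<alpha> - M (v - w))) = -1"
    using vw(4) by (metis chi_double_\<alpha> chi_add mult_1)
  then show ?thesis
    unfolding twist odd_pairs_def mem_Collect_eq prod.case
    using first Lat_diff[OF first Md] by blast
qed

text \<open>The twist keeps \<open>x + y\<close> and \<open>QR x + QR y\<close>, hence the summand, and moves the odd pairs
  over the coset \<open>\<alpha> + Lat\<close> to the odd pairs over \<open>Lat\<close>.\<close>
lemma infsum_pair_term_twist:
  assumes inv: "\<And>d. M (M d) = d" and iso: "\<And>d. QR (M d) = QR d"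
  shows "infsum (pair_term \<tau> z \<alpha>) (odd_pairs \<beta>) = infsum (pair_term \<tau> z 0) (odd_pairs \<beta>)"
proof (rule infsum_reindex_bij_witness[of _ "\<lambda>q. twist M q - (\<alpha>, \<alpha>)" "\<lambda>p. twist M (p + (\<alpha>, \<alpha>))"])
  fix p assume p: "p \<in> odd_pairs \<beta>"
  show "twist M (twist M (p + (\<alpha>, \<alpha>))) - (\<alpha>, \<alpha>) = p"
    by (simp add: twist_twist inv)
  show "twist M (p + (\<alpha>, \<alpha>)) \<in> odd_pairs \<beta>"
    using p by (rule twist_shift_in_odd_pairs)
  obtain v w where "p = (v, w)"
    by fastforce
  then show "pair_term \<tau> z 0 (twist M (p + (\<alpha>, \<alpha>))) = pair_term \<tau> z \<alpha> p"
    using gauss_mult_twist[OF iso, where x = "\<alpha> + v" and y = "\<alpha> + w"]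
    by (simp add: pair_term_def case_prod_unfold add.commute)
next
  fix q assume "q \<in> odd_pairs \<beta>"
  then show "twist M q - (\<alpha>, \<alpha>) \<in> odd_pairs \<beta>"
    by (rule twist_unshift_in_odd_pairs)
  show "twist M (twist M q - (\<alpha>, \<alpha>) + (\<alpha>, \<alpha>)) = q"
    by (simp add: twist_twist inv)
qed

end

lemma theta_square_identity_of_involution:
  fixes M :: "real ^ 4 \<Rightarrow> real ^ 4"
  assumes "Im \<tau> > 0" and "2 *\<^sub>R \<alpha> \<in> Lat" and "\<beta> \<in> halfLat" and "chi \<beta> (2 *\<^sub>R \<alpha>) = 1"
    and "\<And>d. M (M d) = d" and "\<And>d. QR (M d) = QR d"
    and "\<And>d. d \<in> Lat \<Longrightarrow> chi \<beta> d = -1 \<Longrightarrow> \<alpha> + (1/2) *\<^sub>R (d + M d) \<in> Lat"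
  shows "(theta \<alpha> \<beta> \<tau> z)^2 + (theta 0 0 \<tau> z)^2 = (theta \<alpha> 0 \<tau> z)^2 + (theta 0 \<beta> \<tau> z)^2"
proof -
  have "(theta \<alpha> \<beta> \<tau> z)^2 - (theta \<alpha> 0 \<tau> z)^2 = (theta 0 \<beta> \<tau> z)^2 - (theta 0 0 \<tau> z)^2"
    using theta_square_diff[OF assms(1,3), of \<alpha> z] theta_square_diff[OF assms(1,3), of 0 z]
      infsum_pair_term_twist[OF assms(2-4,7,5,6), of \<tau> z] by simp
  then show ?thesis
    by (simp add: algebra_simps)
qed

text \<open>Each of the nine cases is witnessed by an involutive isometry \<open>M\<close> of \<open>QR\<close>. The parity
  hypothesis is checked on the integer vector \<open>2\<alpha> + d + M d\<close>, whose coordinates are all even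
  when \<open>\<chi>\<^sub>\<beta>(d) = -1\<close>.\<close>
definition isom_a1_b1 :: "real ^ 4 \<Rightarrow> real ^ 4" where
  "isom_a1_b1 d = vec4 (d$0) (2*d$0 - d$1) (d$0 - d$1 + d$3) (d$0 - d$1 + d$2)"

lemma theta_square_identity_a1_b1:
  assumes "Im \<tau> > 0"
  shows "(theta a1 b1 \<tau> z)^2 + (theta 0 0 \<tau> z)^2 = (theta a1 0 \<tau> z)^2 + (theta 0 b1 \<tau> z)^2"
proof (rule theta_square_identity_of_involution[OF assms])
  show "a1 + (1/2) *\<^sub>R (d + isom_a1_b1 d) \<in> Lat" if lat: "d \<in> Lat" and odd: "chi b1 d = -1" for d
  proof -
    obtain x0 x1 x2 x3 where d: "d = ivec x0 x1 x2 x3"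
      using lat by (rule Lat_ivecE)
    have "odd (x0 - x1 + x2 + x3)"
      using odd by (simp add: d chi_b1_ivec)
    then show ?thesis
      by (intro half_sum_in_Lat_ivecI[of _ _ "2*x0" "2*x0" "x0 - x1 + x2 + x3 + 1" "x0 - x1 + x2 + x3 + 1"])
         (simp add: d ivec_def isom_a1_b1_def a1_def vec_eq_4, auto)
  qed
qed (simp_all add: isom_a1_b1_def a1_def b1_def vec_eq_4 QR_def BR_def chi_def e_Ints Lat_iff halfLat_def forall_4 algebra_simps)

definition isom_a1_b2 :: "real ^ 4 \<Rightarrow> real ^ 4" where
  "isom_a1_b2 d = vec4 (- d$0) (- d$1) (- d$1 + d$2) (- d$1 + d$3)"

lemma theta_square_identity_a1_b2:
  assumes "Im \<tau> > 0"
  shows "(theta a1 b2 \<tau> z)^2 + (theta 0 0 \<tau> z)^2 = (theta a1 0 \<tau> z)^2 + (theta 0 b2 \<tau> z)^2"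
proof (rule theta_square_identity_of_involution[OF assms])
  show "a1 + (1/2) *\<^sub>R (d + isom_a1_b2 d) \<in> Lat" if lat: "d \<in> Lat" and odd: "chi b2 d = -1" for d
  proof -
    obtain x0 x1 x2 x3 where d: "d = ivec x0 x1 x2 x3"
      using lat by (rule Lat_ivecE)
    have "odd (2*x0 - x1)"
      using odd by (simp add: d chi_b2_ivec)
    then show ?thesis
      by (intro half_sum_in_Lat_ivecI[of _ _ "0" "0" "- x1 + 2*x2 + 1" "- x1 + 2*x3 + 1"])
         (simp add: d ivec_def isom_a1_b2_def a1_def vec_eq_4, auto)
  qed
qed (simp_all add: isom_a1_b2_def a1_def b2_def vec_eq_4 QR_def BR_def chi_def e_Ints Lat_iff halfLat_def forall_4 algebra_simps)

definition isom_a1_b3 :: "real ^ 4 \<Rightarrow> real ^ 4" where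
  "isom_a1_b3 d = vec4 (- d$0) (- 2*d$0 + d$1) (- d$0 + d$3) (- d$0 + d$2)"

lemma theta_square_identity_a1_b3:
  assumes "Im \<tau> > 0"
  shows "(theta a1 b3 \<tau> z)^2 + (theta 0 0 \<tau> z)^2 = (theta a1 0 \<tau> z)^2 + (theta 0 b3 \<tau> z)^2"
proof (rule theta_square_identity_of_involution[OF assms])
  show "a1 + (1/2) *\<^sub>R (d + isom_a1_b3 d) \<in> Lat" if lat: "d \<in> Lat" and odd: "chi b3 d = -1" for d
  proof -
    obtain x0 x1 x2 x3 where d: "d = ivec x0 x1 x2 x3"
      using lat by (rule Lat_ivecE)
    have "odd (- x0 + 2*x1 - x2 - x3)"
      using odd by (simp add: d chi_b3_ivec)
    then show ?thesis
      by (intro half_sum_in_Lat_ivecI[of _ _ "0" "- 2*x0 + 2*x1" "- x0 + x2 + x3 + 1" "- x0 + x2 + x3 + 1"])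
         (simp add: d ivec_def isom_a1_b3_def a1_def vec_eq_4, auto)
  qed
qed (simp_all add: isom_a1_b3_def a1_def b3_def vec_eq_4 QR_def BR_def chi_def e_Ints Lat_iff halfLat_def forall_4 algebra_simps)

definition isom_a2_b1 :: "real ^ 4 \<Rightarrow> real ^ 4" where
  "isom_a2_b1 d = vec4 (- d$1 + d$2 + d$3) (- d$1 + 2*d$2) (d$2) (d$0 - d$1 + d$2)"

lemma theta_square_identity_a2_b1:
  assumes "Im \<tau> > 0"
  shows "(theta a2 b1 \<tau> z)^2 + (theta 0 0 \<tau> z)^2 = (theta a2 0 \<tau> z)^2 + (theta 0 b1 \<tau> z)^2"
proof (rule theta_square_identity_of_involution[OF assms])
  show "a2 + (1/2) *\<^sub>R (d + isom_a2_b1 d) \<in> Lat" if lat: "d \<in> Lat" and odd: "chi b1 d = -1" for d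
  proof -
    obtain x0 x1 x2 x3 where d: "d = ivec x0 x1 x2 x3"
      using lat by (rule Lat_ivecE)
    have "odd (x0 - x1 + x2 + x3)"
      using odd by (simp add: d chi_b1_ivec)
    then show ?thesis
      by (intro half_sum_in_Lat_ivecI[of _ _ "x0 - x1 + x2 + x3 + 1" "2*x2" "2*x2" "x0 - x1 + x2 + x3 + 1"])
         (simp add: d ivec_def isom_a2_b1_def a2_def vec_eq_4, auto)
  qed
qed (simp_all add: isom_a2_b1_def a2_def b1_def vec_eq_4 QR_def BR_def chi_def e_Ints Lat_iff halfLat_def forall_4 algebra_simps)

definition isom_a2_b2 :: "real ^ 4 \<Rightarrow> real ^ 4" where
  "isom_a2_b2 d = vec4 (d$0 - d$1) (- d$1) (- d$2) (- d$1 + d$3)"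

lemma theta_square_identity_a2_b2:
  assumes "Im \<tau> > 0"
  shows "(theta a2 b2 \<tau> z)^2 + (theta 0 0 \<tau> z)^2 = (theta a2 0 \<tau> z)^2 + (theta 0 b2 \<tau> z)^2"
proof (rule theta_square_identity_of_involution[OF assms])
  show "a2 + (1/2) *\<^sub>R (d + isom_a2_b2 d) \<in> Lat" if lat: "d \<in> Lat" and odd: "chi b2 d = -1" for d
  proof -
    obtain x0 x1 x2 x3 where d: "d = ivec x0 x1 x2 x3"
      using lat by (rule Lat_ivecE)
    have "odd (2*x0 - x1)"
      using odd by (simp add: d chi_b2_ivec)
    then show ?thesis
      by (intro half_sum_in_Lat_ivecI[of _ _ "2*x0 - x1 + 1" "0" "0" "- x1 + 2*x3 + 1"])
         (simp add: d ivec_def isom_a2_b2_def a2_def vec_eq_4, auto)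
  qed
qed (simp_all add: isom_a2_b2_def a2_def b2_def vec_eq_4 QR_def BR_def chi_def e_Ints Lat_iff halfLat_def forall_4 algebra_simps)

definition isom_a2_b3 :: "real ^ 4 \<Rightarrow> real ^ 4" where
  "isom_a2_b3 d = vec4 (d$2 - d$3) (- d$1 + 2*d$2) (d$2) (- d$0 + d$2)"

lemma theta_square_identity_a2_b3:
  assumes "Im \<tau> > 0"
  shows "(theta a2 b3 \<tau> z)^2 + (theta 0 0 \<tau> z)^2 = (theta a2 0 \<tau> z)^2 + (theta 0 b3 \<tau> z)^2"
proof (rule theta_square_identity_of_involution[OF assms])
  show "a2 + (1/2) *\<^sub>R (d + isom_a2_b3 d) \<in> Lat" if lat: "d \<in> Lat" and odd: "chi b3 d = -1" for d
  proof -
    obtain x0 x1 x2 x3 where d: "d = ivec x0 x1 x2 x3"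
      using lat by (rule Lat_ivecE)
    have "odd (- x0 + 2*x1 - x2 - x3)"
      using odd by (simp add: d chi_b3_ivec)
    then show ?thesis
      by (intro half_sum_in_Lat_ivecI[of _ _ "x0 + x2 - x3 + 1" "2*x2" "2*x2" "- x0 + x2 + x3 + 1"])
         (simp add: d ivec_def isom_a2_b3_def a2_def vec_eq_4, auto)
  qed
qed (simp_all add: isom_a2_b3_def a2_def b3_def vec_eq_4 QR_def BR_def chi_def e_Ints Lat_iff halfLat_def forall_4 algebra_simps)

definition isom_a3_b1 :: "real ^ 4 \<Rightarrow> real ^ 4" where
  "isom_a3_b1 d = vec4 (d$1 - d$2 - d$3) (d$1 - 2*d$3) (- d$0 + d$1 - d$3) (- d$3)"

lemma theta_square_identity_a3_b1:
  assumes "Im \<tau> > 0"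
  shows "(theta a3 b1 \<tau> z)^2 + (theta 0 0 \<tau> z)^2 = (theta a3 0 \<tau> z)^2 + (theta 0 b1 \<tau> z)^2"
proof (rule theta_square_identity_of_involution[OF assms])
  show "a3 + (1/2) *\<^sub>R (d + isom_a3_b1 d) \<in> Lat" if lat: "d \<in> Lat" and odd: "chi b1 d = -1" for d
  proof -
    obtain x0 x1 x2 x3 where d: "d = ivec x0 x1 x2 x3"
      using lat by (rule Lat_ivecE)
    have "odd (x0 - x1 + x2 + x3)"
      using odd by (simp add: d chi_b1_ivec)
    then show ?thesis
      by (intro half_sum_in_Lat_ivecI[of _ _ "x0 + x1 - x2 - x3 + 1" "2*x1 - 2*x3" "- x0 + x1 + x2 - x3 + 1" "0"])
         (simp add: d ivec_def isom_a3_b1_def a3_def vec_eq_4, auto)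
  qed
qed (simp_all add: isom_a3_b1_def a3_def b1_def vec_eq_4 QR_def BR_def chi_def e_Ints Lat_iff halfLat_def forall_4 algebra_simps)

definition isom_a3_b2 :: "real ^ 4 \<Rightarrow> real ^ 4" where
  "isom_a3_b2 d = vec4 (d$0 - d$1) (- d$1) (- d$1 + d$2) (- d$3)"

lemma theta_square_identity_a3_b2:
  assumes "Im \<tau> > 0"
  shows "(theta a3 b2 \<tau> z)^2 + (theta 0 0 \<tau> z)^2 = (theta a3 0 \<tau> z)^2 + (theta 0 b2 \<tau> z)^2"
proof (rule theta_square_identity_of_involution[OF assms])
  show "a3 + (1/2) *\<^sub>R (d + isom_a3_b2 d) \<in> Lat" if lat: "d \<in> Lat" and odd: "chi b2 d = -1" for d
  proof -
    obtain x0 x1 x2 x3 where d: "d = ivec x0 x1 x2 x3"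
      using lat by (rule Lat_ivecE)
    have "odd (2*x0 - x1)"
      using odd by (simp add: d chi_b2_ivec)
    then show ?thesis
      by (intro half_sum_in_Lat_ivecI[of _ _ "2*x0 - x1 + 1" "0" "- x1 + 2*x2 + 1" "0"])
         (simp add: d ivec_def isom_a3_b2_def a3_def vec_eq_4, auto)
  qed
qed (simp_all add: isom_a3_b2_def a3_def b2_def vec_eq_4 QR_def BR_def chi_def e_Ints Lat_iff halfLat_def forall_4 algebra_simps)

definition isom_a3_b3 :: "real ^ 4 \<Rightarrow> real ^ 4" where
  "isom_a3_b3 d = vec4 (- d$2 + d$3) (- d$1 + 2*d$3) (- d$0 + d$3) (d$3)"

lemma theta_square_identity_a3_b3:
  assumes "Im \<tau> > 0"
  shows "(theta a3 b3 \<tau> z)^2 + (theta 0 0 \<tau> z)^2 = (theta a3 0 \<tau> z)^2 + (theta 0 b3 \<tau> z)^2"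
proof (rule theta_square_identity_of_involution[OF assms])
  show "a3 + (1/2) *\<^sub>R (d + isom_a3_b3 d) \<in> Lat" if lat: "d \<in> Lat" and odd: "chi b3 d = -1" for d
  proof -
    obtain x0 x1 x2 x3 where d: "d = ivec x0 x1 x2 x3"
      using lat by (rule Lat_ivecE)
    have "odd (- x0 + 2*x1 - x2 - x3)"
      using odd by (simp add: d chi_b3_ivec)
    then show ?thesis
      by (intro half_sum_in_Lat_ivecI[of _ _ "x0 - x2 + x3 + 1" "2*x3" "- x0 + x2 + x3 + 1" "2*x3"])
         (simp add: d ivec_def isom_a3_b3_def a3_def vec_eq_4, auto)
  qed
qed (simp_all add: isom_a3_b3_def a3_def b3_def vec_eq_4 QR_def BR_def chi_def e_Ints Lat_iff halfLat_def forall_4 algebra_simps)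

lemma theta_add_Lat:
  assumes "l \<in> Lat"
  shows "theta (\<alpha> + l) \<beta> \<tau> z = chi \<beta> (- l) * theta \<alpha> \<beta> \<tau> z"
proof -
  have "theta (\<alpha> + l) \<beta> \<tau> z = (\<Sum>\<^sub>\<infinity>u\<in>Lat. chi \<beta> (u - l) * gauss \<tau> z (\<alpha> + u))"
    unfolding theta_eq_infsum
    by (rule infsum_reindex_bij_witness[of Lat "\<lambda>u. u - l" "\<lambda>v. v + l"])
       (auto simp: assms Lat_add Lat_diff ac_simps)
  also have "\<dots> = chi \<beta> (- l) * theta \<alpha> \<beta> \<tau> z"
    by (simp add: theta_eq_infsum chi_diff mult_ac flip: infsum_cmult_right')
  finally show ?thesis .
qed

lemma theta_square_add_Lat:
  assumes "l \<in> Lat" and "\<beta> \<in> halfLat"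
  shows "(theta (\<alpha> + l) \<beta> \<tau> z)^2 = (theta \<alpha> \<beta> \<tau> z)^2"
  using chi_halfLat_cases[OF assms(2) Lat_minus[OF assms(1)]]
  by (auto simp: theta_add_Lat[OF assms(1)] power_mult_distrib)

lemma theta_add_Lsharp:
  assumes "h \<in> Lsharp"
  shows "theta \<alpha> (\<beta> + h) \<tau> z = theta \<alpha> \<beta> \<tau> z"
  unfolding theta_eq_infsum by (rule infsum_cong) (simp add: chi_add_left chi_Lsharp_eq_one[OF assms])

lemma theta_square_identity_Aset_Bset:
  assumes "Im \<tau> > 0" and "a \<in> Aset" and "b \<in> Bset"
  shows "(theta a b \<tau> z)^2 + (theta 0 0 \<tau> z)^2 = (theta a 0 \<tau> z)^2 + (theta 0 b \<tau> z)^2"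
  using assms(2,3) theta_square_identity_a1_b1[OF assms(1)] theta_square_identity_a1_b2[OF assms(1)]
    theta_square_identity_a1_b3[OF assms(1)] theta_square_identity_a2_b1[OF assms(1)]
    theta_square_identity_a2_b2[OF assms(1)] theta_square_identity_a2_b3[OF assms(1)]
    theta_square_identity_a3_b1[OF assms(1)] theta_square_identity_a3_b2[OF assms(1)]
    theta_square_identity_a3_b3[OF assms(1)]
  unfolding Aset_eq Bset_eq by (auto simp: add.commute)

theorem theta_square_identity:
  assumes "\<alpha> \<in> Lsharp" and "\<beta> \<in> halfLat" and "Im \<tau> > 0"
  shows "(theta \<alpha> \<beta> \<tau> z)^2 + (theta 0 0 \<tau> z)^2 = (theta \<alpha> 0 \<tau> z)^2 + (theta 0 \<beta> \<tau> z)^2"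
proof -
  obtain a where a: "a \<in> Aset" "\<alpha> - a \<in> Lat"
    using Lsharp_Aset_rep[OF assms(1)] .
  obtain b where b: "b \<in> Bset" "\<beta> - b \<in> Lsharp"
    using halfLat_Bset_rep[OF assms(2)] .
  have shift_\<alpha>: "(theta \<alpha> \<beta>' \<tau> z)^2 = (theta a \<beta>' \<tau> z)^2" if "\<beta>' \<in> halfLat" for \<beta>'
    using theta_square_add_Lat[OF a(2) that, of a] by simp
  have shift_\<beta>: "theta \<alpha>' \<beta> \<tau> z = theta \<alpha>' b \<tau> z" for \<alpha>'
    using theta_add_Lsharp[OF b(2), of \<alpha>' b] by simp
  have "(theta \<alpha> \<beta> \<tau> z)^2 = (theta a b \<tau> z)^2"
    using shift_\<alpha>[OF Bset_subset_halfLat[OF b(1)]] by (simp add: shift_\<beta>)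
  moreover have "(theta \<alpha> 0 \<tau> z)^2 = (theta a 0 \<tau> z)^2"
    by (rule shift_\<alpha>) simp
  ultimately show ?thesis
    using theta_square_identity_Aset_Bset[OF assms(3) a(1) b(1)] by (simp add: shift_\<beta>)
qed

section \<open>Translations in \<open>z\<close>\<close>

definition tau_vec :: "complex \<Rightarrow> real ^ 4 \<Rightarrow> complex ^ 4" where
  "tau_vec \<tau> \<gamma> = (\<chi> i. \<tau> * of_real (\<gamma> $ i))"

lemma gauss_translate_real: "gauss \<tau> (z + cvec \<delta>) x = gauss \<tau> z x * e (of_real (BR x \<delta>))"
  unfolding gauss_def Bf_add_right Bf_cvec e_add[symmetric] by (simp add: algebra_simps)

lemma theta_translate_real:
  "theta \<alpha> \<beta> \<tau> (z + cvec \<delta>) = e (of_real (BR \<alpha> \<delta>)) * theta \<alpha> (\<beta> + \<delta>) \<tau> z"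
  unfolding theta_eq_infsum infsum_cmult_right'[symmetric]
proof (rule infsum_cong)
  fix v
  show "chi \<beta> v * gauss \<tau> (z + cvec \<delta>) (\<alpha> + v) = e (of_real (BR \<alpha> \<delta>)) * (chi (\<beta> + \<delta>) v * gauss \<tau> z (\<alpha> + v))"
    unfolding gauss_translate_real chi_add_left
    by (simp add: chi_def BR_add_left BR_commute[of v \<delta>] e_add)
qed

lemma gauss_translate_tau:
  "gauss \<tau> (z + tau_vec \<tau> \<gamma>) x = e (- (\<tau> * of_real (QR \<gamma>)) - Bf (cvec \<gamma>) z) * gauss \<tau> z (x + \<gamma>)"
proof -
  have "Bf (cvec x) (tau_vec \<tau> \<gamma>) = \<tau> * of_real (BR x \<gamma>)"
    by (simp add: Bf_eq BR_def tau_vec_def algebra_simps)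
  then show ?thesis
    unfolding gauss_def Bf_add_right e_add[symmetric] QR_add cvec_add Bf_add_left
    by (simp add: algebra_simps)
qed

lemma theta_translate_tau:
  "theta \<alpha> \<beta> \<tau> (z + tau_vec \<tau> \<gamma>) = e (- (\<tau> * of_real (QR \<gamma>)) - Bf (cvec \<gamma>) z) * theta (\<alpha> + \<gamma>) \<beta> \<tau> z"
  unfolding theta_eq_infsum gauss_translate_tau
  by (simp add: ac_simps flip: infsum_cmult_right')

lemma theta_square_translate_real:
  assumes "\<alpha> \<in> Lsharp" and "\<delta> \<in> halfLat"
  shows "(theta \<alpha> \<beta> \<tau> (z + cvec \<delta>))^2 = (theta \<alpha> (\<beta> + \<delta>) \<tau> z)^2"
proof -
  have "(e (of_real (BR \<alpha> \<delta>)))^2 = e (of_real (BR \<alpha> (2 *\<^sub>R \<delta>)))"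
    by (simp add: BR_scaleR_right power2_eq_square flip: e_add)
  also have "\<dots> = 1"
    using BR_Lsharp_Ints[OF assms(1) halfLat_double[OF assms(2)]] by (simp add: e_Ints)
  finally show ?thesis
    by (simp add: theta_translate_real power_mult_distrib)
qed

lemma theta_square_translate_real_Lsharp:
  assumes "Im \<tau> > 0" and "\<alpha> \<in> Lsharp" and "\<delta> \<in> halfLat"
  shows "(theta \<alpha> 0 \<tau> (z + cvec \<delta>))^2 = (theta \<alpha> 0 \<tau> z)^2 + (theta 0 \<delta> \<tau> z)^2 - (theta 0 0 \<tau> z)^2"
  using theta_square_translate_real[OF assms(2,3), of 0 \<tau> z] theta_square_identity[OF assms(2,3,1), of z]
  by (simp add: algebra_simps)

lemma theta_square_translate_real_coset:
  assumes "\<delta> \<in> halfLat" and "\<beta> + \<delta> - \<beta>' \<in> Lsharp"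
  shows "(theta 0 \<beta> \<tau> (z + cvec \<delta>))^2 = (theta 0 \<beta>' \<tau> z)^2"
  using theta_square_translate_real[OF zero_in_Lsharp assms(1), of \<beta> \<tau> z]
    theta_add_Lsharp[OF assms(2), of 0 \<beta>' \<tau> z]
  by simp

lemma theta_square_translate_tau_coset:
  assumes "\<alpha> + \<gamma> - \<alpha>' \<in> Lat" and "\<beta> \<in> halfLat"
  shows "(theta \<alpha> \<beta> \<tau> (z + tau_vec \<tau> \<gamma>))^2
       = (e (- (\<tau> * of_real (QR \<gamma>)) - Bf (cvec \<gamma>) z))^2 * (theta \<alpha>' \<beta> \<tau> z)^2"
  using theta_square_add_Lat[OF assms, of \<alpha>' \<tau> z]
  by (simp add: theta_translate_tau power_mult_distrib)

lemma theta_square_translate_tau_Lsharp: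
  assumes "Im \<tau> > 0" and "\<gamma> \<in> Lsharp" and "\<beta> \<in> halfLat"
  shows "(theta 0 \<beta> \<tau> (z + tau_vec \<tau> \<gamma>))^2 = (e (- (\<tau> * of_real (QR \<gamma>)) - Bf (cvec \<gamma>) z))^2
           * ((theta \<gamma> 0 \<tau> z)^2 + (theta 0 \<beta> \<tau> z)^2 - (theta 0 0 \<tau> z)^2)"
  using theta_square_identity[OF assms(2,3,1), of z]
  by (simp add: theta_translate_tau power_mult_distrib eq_diff_eq)

text \<open>The representatives form Klein four-groups: \<open>Aset\<close> modulo \<open>Lat\<close> and \<open>Bset\<close> modulo \<open>Lsharp\<close>.\<close>

lemma theta_square_translate_Bset:
  "(theta 0 0 \<tau> (z + cvec b1))^2 = (theta 0 b1 \<tau> z)^2"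
  "(theta 0 0 \<tau> (z + cvec b2))^2 = (theta 0 b2 \<tau> z)^2"
  "(theta 0 0 \<tau> (z + cvec b3))^2 = (theta 0 b3 \<tau> z)^2"
  "(theta 0 b1 \<tau> (z + cvec b1))^2 = (theta 0 0 \<tau> z)^2"
  "(theta 0 b2 \<tau> (z + cvec b1))^2 = (theta 0 b3 \<tau> z)^2"
  "(theta 0 b3 \<tau> (z + cvec b1))^2 = (theta 0 b2 \<tau> z)^2"
  "(theta 0 b1 \<tau> (z + cvec b2))^2 = (theta 0 b3 \<tau> z)^2"
  "(theta 0 b2 \<tau> (z + cvec b2))^2 = (theta 0 0 \<tau> z)^2"
  "(theta 0 b3 \<tau> (z + cvec b2))^2 = (theta 0 b1 \<tau> z)^2"
  "(theta 0 b1 \<tau> (z + cvec b3))^2 = (theta 0 b2 \<tau> z)^2"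
  "(theta 0 b2 \<tau> (z + cvec b3))^2 = (theta 0 b1 \<tau> z)^2"
  "(theta 0 b3 \<tau> (z + cvec b3))^2 = (theta 0 0 \<tau> z)^2"
  by (rule theta_square_translate_real_coset;
      simp add: b1_def b2_def b3_def halfLat_def forall_4 Lsharp_iff)+

lemma theta_square_translate_tau_Aset:
  "(theta 0 0 \<tau> (tau_vec \<tau> a1))^2 = (e (- (\<tau> * of_real (QR a1))))^2 * (theta a1 0 \<tau> 0)^2"
  "(theta 0 0 \<tau> (tau_vec \<tau> a2))^2 = (e (- (\<tau> * of_real (QR a2))))^2 * (theta a2 0 \<tau> 0)^2"
  "(theta 0 0 \<tau> (tau_vec \<tau> a3))^2 = (e (- (\<tau> * of_real (QR a3))))^2 * (theta a3 0 \<tau> 0)^2"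
  "(theta a1 0 \<tau> (tau_vec \<tau> a1))^2 = (e (- (\<tau> * of_real (QR a1))))^2 * (theta 0 0 \<tau> 0)^2"
  "(theta a2 0 \<tau> (tau_vec \<tau> a1))^2 = (e (- (\<tau> * of_real (QR a1))))^2 * (theta a3 0 \<tau> 0)^2"
  "(theta a3 0 \<tau> (tau_vec \<tau> a1))^2 = (e (- (\<tau> * of_real (QR a1))))^2 * (theta a2 0 \<tau> 0)^2"
  "(theta a1 0 \<tau> (tau_vec \<tau> a2))^2 = (e (- (\<tau> * of_real (QR a2))))^2 * (theta a3 0 \<tau> 0)^2"
  "(theta a2 0 \<tau> (tau_vec \<tau> a2))^2 = (e (- (\<tau> * of_real (QR a2))))^2 * (theta 0 0 \<tau> 0)^2"
  "(theta a3 0 \<tau> (tau_vec \<tau> a2))^2 = (e (- (\<tau> * of_real (QR a2))))^2 * (theta a1 0 \<tau> 0)^2"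
  "(theta a1 0 \<tau> (tau_vec \<tau> a3))^2 = (e (- (\<tau> * of_real (QR a3))))^2 * (theta a2 0 \<tau> 0)^2"
  "(theta a2 0 \<tau> (tau_vec \<tau> a3))^2 = (e (- (\<tau> * of_real (QR a3))))^2 * (theta a1 0 \<tau> 0)^2"
  "(theta a3 0 \<tau> (tau_vec \<tau> a3))^2 = (e (- (\<tau> * of_real (QR a3))))^2 * (theta 0 0 \<tau> 0)^2"
  by (rule theta_square_translate_tau_coset[where z = 0 and \<beta> = 0, simplified];
      simp add: a1_def a2_def a3_def Lat_iff)+

section \<open>The imaginary axis\<close>

lemma e_imag: "e (\<i> * of_real r) = of_real (exp (- 2 * pi * r))"
  unfolding e_def by (simp add: exp_of_real[symmetric] algebra_simps)

lemma gauss_imag_axis: "gauss (\<i> * of_real t) 0 x = of_real (exp (- 2 * pi * t * QR x))"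
proof -
  have "gauss (\<i> * of_real t) 0 x = e (\<i> * of_real (t * QR x))"
    by (simp add: gauss_def mult.assoc)
  also have "\<dots> = of_real (exp (- 2 * pi * (t * QR x)))"
    by (rule e_imag)
  finally show ?thesis
    by (simp add: mult.assoc)
qed

definition theta_axis :: "real ^ 4 \<Rightarrow> real ^ 4 \<Rightarrow> real \<Rightarrow> real" where
  "theta_axis \<alpha> \<beta> t = Re (theta \<alpha> \<beta> (\<i> * of_real t) 0)"

lemma theta_axis_real:
  assumes "t > 0" and "\<beta> \<in> halfLat"
  shows "theta \<alpha> \<beta> (\<i> * of_real t) 0 = of_real (theta_axis \<alpha> \<beta> t)"
proof -
  have "Im (chi \<beta> v * gauss (\<i> * of_real t) 0 (\<alpha> + v)) = 0" if "v \<in> Lat" for v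
    using chi_halfLat_cases[OF assms(2) that] by (auto simp: gauss_imag_axis)
  then have "Im (theta \<alpha> \<beta> (\<i> * of_real t) 0) = 0"
    using infsum_Im[OF summable_on_theta_terms, of "\<i> * of_real t" \<beta> 0 \<alpha>] assms(1)
    by (simp add: theta_eq_infsum infsum_0)
  then show ?thesis
    by (simp add: theta_axis_def complex_eq_iff)
qed

lemma theta_square_imag_axis:
  "t > 0 \<Longrightarrow> \<beta> \<in> halfLat \<Longrightarrow> (theta \<alpha> \<beta> (\<i> * of_real t) 0)^2 = of_real ((theta_axis \<alpha> \<beta> t)^2)"
  by (simp add: theta_axis_real)

lemma theta_axis_zero_eq:
  assumes "t > 0"
  shows "theta_axis \<alpha> 0 t = (\<Sum>\<^sub>\<infinity>v\<in>Lat. exp (- 2 * pi * t * QR (\<alpha> + v)))"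
  using infsum_Re[OF summable_on_theta_terms, of "\<i> * of_real t" 0 0 \<alpha>] assms
  by (simp add: theta_axis_def theta_eq_infsum gauss_imag_axis)

lemma summable_on_gauss_imag_axis:
  "t > 0 \<Longrightarrow> (\<lambda>v. exp (- 2 * pi * t * QR (\<alpha> + v))) summable_on Lat"
  using summable_on_gauss_Lat[of t \<alpha> 0] by (simp add: mult.assoc)

lemma theta_axis_zero_nonneg: "t > 0 \<Longrightarrow> theta_axis \<alpha> 0 t \<ge> 0"
  by (simp add: theta_axis_zero_eq infsum_nonneg)

lemma theta_axis_origin_ge_one:
  assumes "t > 0"
  shows "theta_axis 0 0 t \<ge> 1"
proof -
  have "(\<Sum>v\<in>{0}. exp (- 2 * pi * t * QR (0 + v))) \<le> (\<Sum>\<^sub>\<infinity>v\<in>Lat. exp (- 2 * pi * t * QR (0 + v)))"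
    by (rule finite_sum_le_infsum[OF summable_on_gauss_imag_axis[OF assms]]) auto
  then show ?thesis
    by (simp add: theta_axis_zero_eq[OF assms] QR_def)
qed

lemma half_plus_Ints_square_ge:
  assumes "y \<in> \<int>"
  shows "(1/2 + y)^2 \<ge> (1/4 :: real)"
proof -
  obtain n where n: "y = of_int n"
    using assms by (elim Ints_cases)
  have "0 \<le> n * (n + 1)"
    by (cases "n \<ge> 0") (auto simp: zero_le_mult_iff)
  then have "0 \<le> y * (y + 1)"
    unfolding n by (metis of_int_0_le_iff of_int_1 of_int_add of_int_mult)
  then show ?thesis
    by (simp add: power2_eq_square algebra_simps)
qed

text \<open>On the cosets \<open>a + Lat\<close> with \<open>a \<noteq> 0\<close> two coordinates are half-integers.\<close>
lemma QR_Aset_coset_ge: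
  assumes "a \<in> {a1, a2, a3}" and "v \<in> Lat"
  shows "QR (a + v) \<ge> 1/20"
proof -
  have half: "(1/2 + v$i)^2 \<ge> 1/4" for i
    using assms(2) half_plus_Ints_square_ge by (simp add: Lat_def)
  have nonneg: "0 \<le> (v$i)^2" for i
    by simp
  from assms(1) consider "a = a1" | "a = a2" | "a = a3"
    by blast
  then have "(a + v)$0^2 + (a + v)$1^2 + (a + v)$2^2 + (a + v)$3^2 \<ge> 1/2"
  proof cases
    case 1
    then have "(a + v)$0^2 + (a + v)$1^2 + (a + v)$2^2 + (a + v)$3^2
        = (v$0)^2 + (v$1)^2 + (1/2 + v$2)^2 + (1/2 + v$3)^2"
      by (simp add: a1_def)
    then show ?thesis
      using half[of 2] half[of 3] nonneg[of 0] nonneg[of 1] by linarith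
  next
    case 2
    then have "(a + v)$0^2 + (a + v)$1^2 + (a + v)$2^2 + (a + v)$3^2
        = (1/2 + v$0)^2 + (v$1)^2 + (v$2)^2 + (1/2 + v$3)^2"
      by (simp add: a2_def)
    then show ?thesis
      using half[of 0] half[of 3] nonneg[of 1] nonneg[of 2] by linarith
  next
    case 3
    then have "(a + v)$0^2 + (a + v)$1^2 + (a + v)$2^2 + (a + v)$3^2
        = (1/2 + v$0)^2 + (v$1)^2 + (1/2 + v$2)^2 + (v$3)^2"
      by (simp add: a3_def)
    then show ?thesis
      using half[of 0] half[of 2] nonneg[of 1] nonneg[of 3] by linarith
  qed
  then show ?thesis
    using QR_ge_sum_squares[of "a + v"] by simp
qed

lemma theta_axis_Aset_decay:
  assumes "a \<in> {a1, a2, a3}" and "t \<ge> 1"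
  shows "theta_axis a 0 t \<le> exp (- pi * (t - 1) / 10) * theta_axis a 0 1"
proof -
  have "exp (- 2 * pi * t * QR (a + v)) \<le> exp (- pi * (t - 1) / 10) * exp (- 2 * pi * 1 * QR (a + v))"
    if "v \<in> Lat" for v
  proof -
    have "(t - 1) * (1/20) \<le> (t - 1) * QR (a + v)"
      using QR_Aset_coset_ge[OF assms(1) that] assms(2) by (intro mult_left_mono) auto
    then have "pi * ((t - 1) * (1/20)) \<le> pi * ((t - 1) * QR (a + v))"
      by (rule mult_left_mono) simp
    moreover have "- 2 * pi * t * QR (a + v) = - 2 * pi * 1 * QR (a + v) - 2 * (pi * ((t - 1) * QR (a + v)))"
      by (simp add: algebra_simps)
    ultimately have "- 2 * pi * t * QR (a + v) \<le> - pi * (t - 1) / 10 + - 2 * pi * 1 * QR (a + v)"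
      by simp
    then show ?thesis
      by (simp flip: exp_add)
  qed
  then have "(\<Sum>\<^sub>\<infinity>v\<in>Lat. exp (- 2 * pi * t * QR (a + v)))
      \<le> (\<Sum>\<^sub>\<infinity>v\<in>Lat. exp (- pi * (t - 1) / 10) * exp (- 2 * pi * 1 * QR (a + v)))"
    using assms(2) by (intro infsum_mono summable_on_gauss_imag_axis summable_on_cmult_right) auto
  then show ?thesis
    using assms(2) by (simp add: theta_axis_zero_eq infsum_cmult_right')
qed

lemma eventually_theta_axis_Aset_le_half:
  assumes "a \<in> {a1, a2, a3}"
  shows "eventually (\<lambda>t. theta_axis a 0 t \<le> 1/2) at_top"
proof -
  have "((\<lambda>t. exp (- pi * (t - 1) / 10)) \<longlongrightarrow> 0) at_top"
    by real_asymp
  then have "((\<lambda>t. exp (- pi * (t - 1) / 10) * theta_axis a 0 1) \<longlongrightarrow> 0) at_top"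
    by (rule tendsto_mult_left_zero)
  then have "eventually (\<lambda>t. exp (- pi * (t - 1) / 10) * theta_axis a 0 1 < 1/2) at_top"
    by (rule order_tendstoD) simp
  then show ?thesis
    using eventually_ge_at_top[of 1]
    by eventually_elim (use theta_axis_Aset_decay[OF assms] in fastforce)
qed

lemma theta_square_signed_sum_eq:
  assumes "Im \<tau> > 0"
  shows "(\<lambda>(v, w). (1 + p * chi b1 (v + w) + q * chi b2 (v + w) + r * chi b3 (v + w))
           * pair_term \<tau> z 0 (v, w)) summable_on Lat \<times> Lat"
    and "(theta 0 0 \<tau> z)^2 + p * (theta 0 b1 \<tau> z)^2 + q * (theta 0 b2 \<tau> z)^2 + r * (theta 0 b3 \<tau> z)^2
       = (\<Sum>\<^sub>\<infinity>(v, w)\<in>Lat \<times> Lat. (1 + p * chi b1 (v + w) + q * chi b2 (v + w) + r * chi b3 (v + w))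
           * pair_term \<tau> z 0 (v, w))"
proof -
  let ?g = "\<lambda>(v, w). (1 + p * chi b1 (v + w) + q * chi b2 (v + w) + r * chi b3 (v + w))
             * pair_term \<tau> z 0 (v, w)"
  let ?f = "\<lambda>\<beta> x. chi \<beta> (fst x + snd x) * pair_term \<tau> z 0 x"
  have f: "?f \<beta> summable_on Lat \<times> Lat" for \<beta>
    using theta_square_eq_infsum(1)[OF assms(1), of \<beta> z 0] by (simp add: case_prod_unfold)
  have square: "(theta 0 \<beta> \<tau> z)^2 = infsum (?f \<beta>) (Lat \<times> Lat)" for \<beta>
    using theta_square_eq_infsum(2)[OF assms(1), of 0 \<beta> z] by (simp add: case_prod_unfold)
  have g: "?g = (\<lambda>x. ?f 0 x + p * ?f b1 x + q * ?f b2 x + r * ?f b3 x)"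
    by (auto simp: fun_eq_iff algebra_simps)
  show "?g summable_on Lat \<times> Lat"
    unfolding g by (intro summable_on_add summable_on_cmult_right f)
  show "(theta 0 0 \<tau> z)^2 + p * (theta 0 b1 \<tau> z)^2 + q * (theta 0 b2 \<tau> z)^2 + r * (theta 0 b3 \<tau> z)^2
      = infsum ?g (Lat \<times> Lat)"
    unfolding g square
    by (intro infsumI[symmetric] has_sum_add has_sum_cmult_right has_sum_infsum f)
qed

lemma theta_square_signed_sum_pos:
  assumes "t > 0" and s2: "s2 \<in> {1, -1}" and s3: "s3 \<in> {1, -1}"
  shows "Re ((theta 0 0 (\<i> * of_real t) 0)^2 + s2 * s3 * (theta 0 b1 (\<i> * of_real t) 0)^2
           + s2 * (theta 0 b2 (\<i> * of_real t) 0)^2 + s3 * (theta 0 b3 (\<i> * of_real t) 0)^2) > 0"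
proof -
  define \<tau> where "\<tau> = \<i> * complex_of_real t"
  have \<tau>: "Im \<tau> > 0"
    using assms(1) by (simp add: \<tau>_def)
  define W where "W u = 1 + s2 * s3 * chi b1 u + s2 * chi b2 u + s3 * chi b3 u" for u
  define g where "g = (\<lambda>(v, w). W (v + w) * pair_term \<tau> 0 0 (v, w))"
  have summable: "g summable_on Lat \<times> Lat"
    using theta_square_signed_sum_eq(1)[OF \<tau>, where p = "s2 * s3" and q = s2 and r = s3 and z = 0]
    by (simp add: g_def W_def)
  have g: "g (v, w) = W (v + w) * of_real (exp (- 2 * pi * t * QR v) * exp (- 2 * pi * t * QR w))" for v w
    by (simp add: g_def pair_term_def \<tau>_def gauss_imag_axis)
  have nonneg: "Re (g p) \<ge> 0" if "p \<in> Lat \<times> Lat" for p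
  proof -
    from \<open>p \<in> Lat \<times> Lat\<close> obtain v w where p: "p = (v, w)" and v: "v \<in> Lat" and w: "w \<in> Lat"
      by auto
    have "W (v + w) \<in> {0, 4}"
      unfolding W_def by (rule chi_signed_weight_cases[OF s2 s3 Lat_add[OF v w]])
    then show ?thesis
      by (auto simp: p g)
  qed
  obtain u where u: "u \<in> Lat" "chi b2 u = s2" "chi b3 u = s3"
    using Lat_chi_b2_b3_exists[OF s2 s3] .
  have "W u = 4"
    using s2 s3 by (auto simp: W_def chi_b1_eq_mult[OF u(1)] u)
  then have "0 < Re (g (u, 0))"
    by (simp add: g)
  also have "\<dots> \<le> (\<Sum>\<^sub>\<infinity>p\<in>Lat \<times> Lat. Re (g p))"
    using finite_sum_le_infsum[OF summable_on_Re[OF summable], of "{(u, 0)}"] nonneg u(1) by simp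
  also have "\<dots> = Re (infsum g (Lat \<times> Lat))"
    by (rule infsum_Re[OF summable])
  finally show ?thesis
    using theta_square_signed_sum_eq(2)[OF \<tau>, where p = "s2 * s3" and q = s2 and r = s3 and z = 0]
    by (simp add: g_def W_def \<tau>_def)
qed

lemma Re_pos_nonzero: "Re x > 0 \<Longrightarrow> x \<noteq> 0"
  by auto

lemma theta_square_origin_Bset_nonzero:
  assumes "t > 0"
  shows "(theta 0 0 (\<i> * of_real t) 0)^2 + (theta 0 b1 (\<i> * of_real t) 0)^2
           - (theta 0 b2 (\<i> * of_real t) 0)^2 - (theta 0 b3 (\<i> * of_real t) 0)^2 \<noteq> 0" (is "?B1 \<noteq> 0")
    and "(theta 0 0 (\<i> * of_real t) 0)^2 - (theta 0 b1 (\<i> * of_real t) 0)^2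
           + (theta 0 b2 (\<i> * of_real t) 0)^2 - (theta 0 b3 (\<i> * of_real t) 0)^2 \<noteq> 0" (is "?B2 \<noteq> 0")
    and "(theta 0 0 (\<i> * of_real t) 0)^2 - (theta 0 b1 (\<i> * of_real t) 0)^2
           - (theta 0 b2 (\<i> * of_real t) 0)^2 + (theta 0 b3 (\<i> * of_real t) 0)^2 \<noteq> 0" (is "?B3 \<noteq> 0")
proof -
  show "?B1 \<noteq> 0"
    using theta_square_signed_sum_pos[OF assms, of "-1" "-1"] by (intro Re_pos_nonzero) simp
  show "?B2 \<noteq> 0"
    using theta_square_signed_sum_pos[OF assms, of 1 "-1"] by (intro Re_pos_nonzero) simp
  show "?B3 \<noteq> 0"
    using theta_square_signed_sum_pos[OF assms, of "-1" 1] by (intro Re_pos_nonzero) simp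
qed

lemma theta_square_origin_Aset_nonzero:
  assumes "t > 0" and small: "theta_axis a1 0 t \<le> 1/2" "theta_axis a2 0 t \<le> 1/2" "theta_axis a3 0 t \<le> 1/2"
  shows "(theta 0 0 (\<i> * of_real t) 0)^2 + (theta a1 0 (\<i> * of_real t) 0)^2
           - (theta a2 0 (\<i> * of_real t) 0)^2 - (theta a3 0 (\<i> * of_real t) 0)^2 \<noteq> 0" (is "?A1 \<noteq> 0")
    and "(theta 0 0 (\<i> * of_real t) 0)^2 - (theta a1 0 (\<i> * of_real t) 0)^2
           + (theta a2 0 (\<i> * of_real t) 0)^2 - (theta a3 0 (\<i> * of_real t) 0)^2 \<noteq> 0" (is "?A2 \<noteq> 0")
    and "(theta 0 0 (\<i> * of_real t) 0)^2 - (theta a1 0 (\<i> * of_real t) 0)^2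
           - (theta a2 0 (\<i> * of_real t) 0)^2 + (theta a3 0 (\<i> * of_real t) 0)^2 \<noteq> 0" (is "?A3 \<noteq> 0")
proof -
  have square: "(theta \<alpha> 0 (\<i> * of_real t) 0)^2 = of_real ((theta_axis \<alpha> 0 t)^2)" for \<alpha>
    using theta_square_imag_axis[OF assms(1) zero_in_halfLat] .
  have quarter: "(theta_axis a 0 t)^2 \<le> 1/4" if "theta_axis a 0 t \<le> 1/2" for a
    using power_mono[OF that theta_axis_zero_nonneg[OF assms(1)], of 2] by (simp add: power2_eq_square)
  have one: "1 \<le> (theta_axis 0 0 t)^2"
    using theta_axis_origin_ge_one[OF assms(1)] by simp
  note bounds = quarter[OF small(1)] quarter[OF small(2)] quarter[OF small(3)] one
  have nonneg: "0 \<le> (theta_axis a 0 t)^2" for a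
    by simp
  show "?A1 \<noteq> 0" "?A2 \<noteq> 0" "?A3 \<noteq> 0"
    using bounds
    by (intro Re_pos_nonzero; simp add: square; use nonneg[of a1] nonneg[of a2] nonneg[of a3] in linarith)+
qed

text \<open>By the identity, four times the left-hand side is the sum of all sixteen
  \<open>\<theta>\<^sub>a\<^sub>,\<^sub>b(i t, 0)\<^sup>2\<close>, \<open>a \<in> Aset\<close>, \<open>b \<in> Bset\<close>, which are non-negative reals with \<open>\<theta>\<^sub>0\<^sub>,\<^sub>0(i t, 0)\<^sup>2 \<ge> 1\<close>.\<close>
lemma theta_square_origin_sum_nonzero:
  assumes "t > 0"
  shows "(theta a1 0 (\<i> * of_real t) 0)^2 + (theta a2 0 (\<i> * of_real t) 0)^2 + (theta a3 0 (\<i> * of_real t) 0)^2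
           - 2 * (theta 0 0 (\<i> * of_real t) 0)^2 + (theta 0 b1 (\<i> * of_real t) 0)^2
           + (theta 0 b2 (\<i> * of_real t) 0)^2 + (theta 0 b3 (\<i> * of_real t) 0)^2 \<noteq> 0" (is "?U \<noteq> 0")
proof -
  define \<tau> where "\<tau> = \<i> * complex_of_real t"
  have \<tau>: "Im \<tau> > 0"
    using assms by (simp add: \<tau>_def)
  have "(\<Sum>a\<in>Aset. \<Sum>b\<in>Bset. (theta a b \<tau> 0)^2)
      = (\<Sum>a\<in>Aset. \<Sum>b\<in>Bset. (theta a 0 \<tau> 0)^2 + (theta 0 b \<tau> 0)^2 - (theta 0 0 \<tau> 0)^2)"
    using theta_square_identity_Aset_Bset[OF \<tau>] by (intro sum.cong refl) (simp add: eq_diff_eq)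
  also have "\<dots> = 4 * ?U"
    by (simp add: sum_Aset sum_Bset \<tau>_def algebra_simps)
  finally have sum: "4 * ?U = (\<Sum>a\<in>Aset. \<Sum>b\<in>Bset. (theta a b \<tau> 0)^2)" ..
  have real: "Re ((theta a b \<tau> 0)^2) = (theta_axis a b t)^2" if "b \<in> Bset" for a b
    using theta_square_imag_axis[OF assms Bset_subset_halfLat[OF that]] by (simp add: \<tau>_def)
  have "1 \<le> (theta_axis 0 0 t)^2"
    using theta_axis_origin_ge_one[OF assms] by simp
  also have "\<dots> \<le> (\<Sum>b\<in>Bset. (theta_axis 0 b t)^2)"
    by (rule member_le_sum) (auto simp: Bset_eq)
  also have "\<dots> \<le> (\<Sum>a\<in>Aset. \<Sum>b\<in>Bset. (theta_axis a b t)^2)"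
    by (rule member_le_sum[of 0 Aset "\<lambda>a. \<Sum>b\<in>Bset. (theta_axis a b t)^2"])
       (auto simp: Aset_eq intro: sum_nonneg)
  also have "\<dots> = Re (4 * ?U)"
    unfolding sum by (simp add: real)
  finally have "4 * ?U \<noteq> 0"
    by (intro Re_pos_nonzero) linarith
  then show ?thesis
    by (metis mult_zero_right)
qed

section \<open>Linear independence\<close>

text \<open>Translating \<open>z\<close> by \<open>b\<^sub>k\<close> adds \<open>(theta 0 b\<^sub>k)\<^sup>2 - (theta 0 0)\<^sup>2\<close> to every \<open>(theta a 0)\<^sup>2\<close> and
  permutes the \<open>(theta 0 b)\<^sup>2\<close>. Adding up the four translates of the relation, weighted by the
  characters of the Klein four-group, gives these equations.\<close>
lemma theta_square_relations_translate_Bset: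
  fixes c0 c1 c2 c3 d1 d2 d3 :: complex
  assumes \<tau>: "Im \<tau> > 0"
    and rel: "\<And>z. c0 * (theta 0 0 \<tau> z)^2 + c1 * (theta a1 0 \<tau> z)^2 + c2 * (theta a2 0 \<tau> z)^2
                    + c3 * (theta a3 0 \<tau> z)^2 + (d1 * (theta 0 b1 \<tau> z)^2 + d2 * (theta 0 b2 \<tau> z)^2
                    + d3 * (theta 0 b3 \<tau> z)^2) = 0"
  shows "4 * (c1 * ((theta a1 0 \<tau> z)^2 - (theta 0 0 \<tau> z)^2) + c2 * ((theta a2 0 \<tau> z)^2 - (theta 0 0 \<tau> z)^2)
              + c3 * ((theta a3 0 \<tau> z)^2 - (theta 0 0 \<tau> z)^2))
         + (c0 + c1 + c2 + c3 + d1 + d2 + d3)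
           * ((theta 0 0 \<tau> z)^2 + (theta 0 b1 \<tau> z)^2 + (theta 0 b2 \<tau> z)^2 + (theta 0 b3 \<tau> z)^2) = 0"
    and "(c0 + c1 + c2 + c3 + d1 - d2 - d3)
           * ((theta 0 0 \<tau> z)^2 + (theta 0 b1 \<tau> z)^2 - (theta 0 b2 \<tau> z)^2 - (theta 0 b3 \<tau> z)^2) = 0"
    and "(c0 + c1 + c2 + c3 - d1 + d2 - d3)
           * ((theta 0 0 \<tau> z)^2 - (theta 0 b1 \<tau> z)^2 + (theta 0 b2 \<tau> z)^2 - (theta 0 b3 \<tau> z)^2) = 0"
    and "(c0 + c1 + c2 + c3 - d1 - d2 + d3)
           * ((theta 0 0 \<tau> z)^2 - (theta 0 b1 \<tau> z)^2 - (theta 0 b2 \<tau> z)^2 + (theta 0 b3 \<tau> z)^2) = 0"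
  using rel[of z] rel[of "z + cvec b1"] rel[of "z + cvec b2"] rel[of "z + cvec b3"]
  by (simp_all only: theta_square_translate_real_Lsharp[OF \<tau>] theta_square_translate_Bset
        Aset_in_Lsharp Bset_in_halfLat) algebra+

text \<open>Translating \<open>z\<close> by \<open>\<tau> a\<^sub>k\<close> permutes the \<open>(theta a 0)\<^sup>2\<close> and turns \<open>(theta 0 b)\<^sup>2\<close> into
  \<open>(theta a\<^sub>k b)\<^sup>2\<close>, all up to the same nonzero factor.\<close>
lemma theta_square_relations_translate_Aset:
  fixes c0 c1 c2 c3 d1 d2 d3 :: complex
  assumes \<tau>: "Im \<tau> > 0"
    and rel: "\<And>z. 4 * (c1 * ((theta a1 0 \<tau> z)^2 - (theta 0 0 \<tau> z)^2) + c2 * ((theta a2 0 \<tau> z)^2 - (theta 0 0 \<tau> z)^2)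
                       + c3 * ((theta a3 0 \<tau> z)^2 - (theta 0 0 \<tau> z)^2))
                  + (c0 + c1 + c2 + c3 + d1 + d2 + d3)
                    * ((theta 0 0 \<tau> z)^2 + (theta 0 b1 \<tau> z)^2 + (theta 0 b2 \<tau> z)^2 + (theta 0 b3 \<tau> z)^2) = 0"
  shows "4 * (c1 * ((theta 0 0 \<tau> 0)^2 - (theta a1 0 \<tau> 0)^2) + c2 * ((theta a3 0 \<tau> 0)^2 - (theta a1 0 \<tau> 0)^2)
              + c3 * ((theta a2 0 \<tau> 0)^2 - (theta a1 0 \<tau> 0)^2))
         + (c0 + c1 + c2 + c3 + d1 + d2 + d3) * (4 * (theta a1 0 \<tau> 0)^2 - 3 * (theta 0 0 \<tau> 0)^2
             + (theta 0 b1 \<tau> 0)^2 + (theta 0 b2 \<tau> 0)^2 + (theta 0 b3 \<tau> 0)^2) = 0"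
    and "4 * (c1 * ((theta a3 0 \<tau> 0)^2 - (theta a2 0 \<tau> 0)^2) + c2 * ((theta 0 0 \<tau> 0)^2 - (theta a2 0 \<tau> 0)^2)
              + c3 * ((theta a1 0 \<tau> 0)^2 - (theta a2 0 \<tau> 0)^2))
         + (c0 + c1 + c2 + c3 + d1 + d2 + d3) * (4 * (theta a2 0 \<tau> 0)^2 - 3 * (theta 0 0 \<tau> 0)^2
             + (theta 0 b1 \<tau> 0)^2 + (theta 0 b2 \<tau> 0)^2 + (theta 0 b3 \<tau> 0)^2) = 0"
    and "4 * (c1 * ((theta a2 0 \<tau> 0)^2 - (theta a3 0 \<tau> 0)^2) + c2 * ((theta a1 0 \<tau> 0)^2 - (theta a3 0 \<tau> 0)^2)
              + c3 * ((theta 0 0 \<tau> 0)^2 - (theta a3 0 \<tau> 0)^2))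
         + (c0 + c1 + c2 + c3 + d1 + d2 + d3) * (4 * (theta a3 0 \<tau> 0)^2 - 3 * (theta 0 0 \<tau> 0)^2
             + (theta 0 b1 \<tau> 0)^2 + (theta 0 b2 \<tau> 0)^2 + (theta 0 b3 \<tau> 0)^2) = 0"
proof -
  have factor: "(e (- (\<tau> * of_real (QR \<gamma>))))^2 \<noteq> 0" for \<gamma>
    by simp
  note translate = theta_square_translate_tau_Aset
    theta_square_translate_tau_Lsharp[OF \<tau>, where z = 0, simplified] Aset_in_Lsharp Bset_in_halfLat
  show "4 * (c1 * ((theta 0 0 \<tau> 0)^2 - (theta a1 0 \<tau> 0)^2) + c2 * ((theta a3 0 \<tau> 0)^2 - (theta a1 0 \<tau> 0)^2)
              + c3 * ((theta a2 0 \<tau> 0)^2 - (theta a1 0 \<tau> 0)^2))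
         + (c0 + c1 + c2 + c3 + d1 + d2 + d3) * (4 * (theta a1 0 \<tau> 0)^2 - 3 * (theta 0 0 \<tau> 0)^2
             + (theta 0 b1 \<tau> 0)^2 + (theta 0 b2 \<tau> 0)^2 + (theta 0 b3 \<tau> 0)^2) = 0"
    using rel[of "tau_vec \<tau> a1"] factor[of a1] by (simp only: translate) algebra
  show "4 * (c1 * ((theta a3 0 \<tau> 0)^2 - (theta a2 0 \<tau> 0)^2) + c2 * ((theta 0 0 \<tau> 0)^2 - (theta a2 0 \<tau> 0)^2)
              + c3 * ((theta a1 0 \<tau> 0)^2 - (theta a2 0 \<tau> 0)^2))
         + (c0 + c1 + c2 + c3 + d1 + d2 + d3) * (4 * (theta a2 0 \<tau> 0)^2 - 3 * (theta 0 0 \<tau> 0)^2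
             + (theta 0 b1 \<tau> 0)^2 + (theta 0 b2 \<tau> 0)^2 + (theta 0 b3 \<tau> 0)^2) = 0"
    using rel[of "tau_vec \<tau> a2"] factor[of a2] by (simp only: translate) algebra
  show "4 * (c1 * ((theta a2 0 \<tau> 0)^2 - (theta a3 0 \<tau> 0)^2) + c2 * ((theta a1 0 \<tau> 0)^2 - (theta a3 0 \<tau> 0)^2)
              + c3 * ((theta 0 0 \<tau> 0)^2 - (theta a3 0 \<tau> 0)^2))
         + (c0 + c1 + c2 + c3 + d1 + d2 + d3) * (4 * (theta a3 0 \<tau> 0)^2 - 3 * (theta 0 0 \<tau> 0)^2
             + (theta 0 b1 \<tau> 0)^2 + (theta 0 b2 \<tau> 0)^2 + (theta 0 b3 \<tau> 0)^2) = 0"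
    using rel[of "tau_vec \<tau> a3"] factor[of a3] by (simp only: translate) algebra
qed

lemma klein_linear_system_trivial:
  fixes c0 c1 c2 c3 d1 d2 d3 x0 x1 x2 x3 y1 y2 y3 :: complex
  assumes B1: "(c0 + c1 + c2 + c3 + d1 - d2 - d3) * (x0 + y1 - y2 - y3) = 0"
    and B2: "(c0 + c1 + c2 + c3 - d1 + d2 - d3) * (x0 - y1 + y2 - y3) = 0"
    and B3: "(c0 + c1 + c2 + c3 - d1 - d2 + d3) * (x0 - y1 - y2 + y3) = 0"
    and nB: "x0 + y1 - y2 - y3 \<noteq> 0" "x0 - y1 + y2 - y3 \<noteq> 0" "x0 - y1 - y2 + y3 \<noteq> 0"
    and A0: "4 * (c1 * (x1 - x0) + c2 * (x2 - x0) + c3 * (x3 - x0))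
              + (c0 + c1 + c2 + c3 + d1 + d2 + d3) * (x0 + y1 + y2 + y3) = 0"
    and A1: "4 * (c1 * (x0 - x1) + c2 * (x3 - x1) + c3 * (x2 - x1))
              + (c0 + c1 + c2 + c3 + d1 + d2 + d3) * (4 * x1 - 3 * x0 + y1 + y2 + y3) = 0"
    and A2: "4 * (c1 * (x3 - x2) + c2 * (x0 - x2) + c3 * (x1 - x2))
              + (c0 + c1 + c2 + c3 + d1 + d2 + d3) * (4 * x2 - 3 * x0 + y1 + y2 + y3) = 0"
    and A3: "4 * (c1 * (x2 - x3) + c2 * (x1 - x3) + c3 * (x0 - x3))
              + (c0 + c1 + c2 + c3 + d1 + d2 + d3) * (4 * x3 - 3 * x0 + y1 + y2 + y3) = 0"
    and nU: "x1 + x2 + x3 - 2 * x0 + y1 + y2 + y3 \<noteq> 0"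
    and nA: "x0 + x1 - x2 - x3 \<noteq> 0" "x0 - x1 + x2 - x3 \<noteq> 0" "x0 - x1 - x2 + x3 \<noteq> 0"
  shows "c0 = 0 \<and> c1 = 0 \<and> c2 = 0 \<and> c3 = 0 \<and> d1 = 0 \<and> d2 = 0 \<and> d3 = 0"
proof -
  have sum: "c0 + c1 + c2 + c3 + d1 + d2 + d3 = 0"
    using A0 A1 A2 A3 nU by algebra
  then have "c2 + c3 = 0" "c1 + c3 = 0" "c1 + c2 = 0"
    using A0 A1 A2 A3 nA by algebra+
  then have "c1 = 0" "c2 = 0" "c3 = 0"
    by algebra+
  then show ?thesis
    using sum B1 B2 B3 nB by algebra
qed

lemma theta_squares_independent:
  fixes c0 c1 c2 c3 d1 d2 d3 :: complex
  assumes rel: "\<And>\<tau> z. Im \<tau> > 0 \<Longrightarrow>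
      c0 * (theta 0 0 \<tau> z)^2 + c1 * (theta a1 0 \<tau> z)^2 + c2 * (theta a2 0 \<tau> z)^2
      + c3 * (theta a3 0 \<tau> z)^2 + (d1 * (theta 0 b1 \<tau> z)^2 + d2 * (theta 0 b2 \<tau> z)^2
      + d3 * (theta 0 b3 \<tau> z)^2) = 0"
  shows "c0 = 0 \<and> c1 = 0 \<and> c2 = 0 \<and> c3 = 0 \<and> d1 = 0 \<and> d2 = 0 \<and> d3 = 0"
proof -
  have "eventually (\<lambda>t. t > 0 \<and> theta_axis a1 0 t \<le> 1/2 \<and> theta_axis a2 0 t \<le> 1/2
                        \<and> theta_axis a3 0 t \<le> 1/2) at_top"
    by (intro eventually_conj eventually_gt_at_top eventually_theta_axis_Aset_le_half) simp_all
  then have "\<exists>t. t > 0 \<and> theta_axis a1 0 t \<le> 1/2 \<and> theta_axis a2 0 t \<le> 1/2 \<and> theta_axis a3 0 t \<le> 1/2"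
    by (rule eventually_happens'[rotated]) simp
  then obtain t where t: "t > 0" "theta_axis a1 0 t \<le> 1/2" "theta_axis a2 0 t \<le> 1/2" "theta_axis a3 0 t \<le> 1/2"
    by blast
  define \<tau> where "\<tau> = \<i> * complex_of_real t"
  have \<tau>: "Im \<tau> > 0"
    using t(1) by (simp add: \<tau>_def)
  note B = theta_square_relations_translate_Bset[OF \<tau> rel[OF \<tau>]]
  note A = theta_square_relations_translate_Aset[OF \<tau> B(1)]
  show ?thesis
    using klein_linear_system_trivial[OF B(2-4)[of 0] theta_square_origin_Bset_nonzero[OF t(1), folded \<tau>_def]
        B(1)[of 0] A theta_square_origin_sum_nonzero[OF t(1), folded \<tau>_def]
        theta_square_origin_Aset_nonzero[OF t, folded \<tau>_def]] .
qed

theorem theorem7p11: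
  shows "(\<forall>a b :: real ^ 4 \<Rightarrow> complex.
            (\<forall>\<tau> z. Im \<tau> > 0 \<longrightarrow>
               (\<Sum>\<alpha>\<in>Aset. a \<alpha> * (theta \<alpha> 0 \<tau> z)^2)
             + (\<Sum>\<beta>\<in>Bset - {0}. b \<beta> * (theta 0 \<beta> \<tau> z)^2) = 0)
            \<longrightarrow> (\<forall>\<alpha>\<in>Aset. a \<alpha> = 0) \<and> (\<forall>\<beta>\<in>Bset - {0}. b \<beta> = 0))
       \<and> (\<forall>\<alpha>\<in>Lsharp. \<forall>\<beta>\<in>halfLat. \<forall>\<tau> z. Im \<tau> > 0 \<longrightarrow>
            (theta \<alpha> \<beta> \<tau> z)^2 + (theta 0 0 \<tau> z)^2
            = (theta \<alpha> 0 \<tau> z)^2 + (theta 0 \<beta> \<tau> z)^2)"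
proof -
  have "(\<forall>\<alpha>\<in>Aset. a \<alpha> = 0) \<and> (\<forall>\<beta>\<in>Bset - {0}. b \<beta> = 0)"
    if rel: "\<forall>\<tau> z. Im \<tau> > 0 \<longrightarrow> (\<Sum>\<alpha>\<in>Aset. a \<alpha> * (theta \<alpha> 0 \<tau> z)^2)
                                   + (\<Sum>\<beta>\<in>Bset - {0}. b \<beta> * (theta 0 \<beta> \<tau> z)^2) = 0"
    for a b :: "real ^ 4 \<Rightarrow> complex"
  proof -
    have "a 0 = 0 \<and> a a1 = 0 \<and> a a2 = 0 \<and> a a3 = 0 \<and> b b1 = 0 \<and> b b2 = 0 \<and> b b3 = 0"
      by (rule theta_squares_independent) (use rel in \<open>simp add: sum_Aset sum_Bset_minus_zero\<close>)
    then show ?thesis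
      by (simp add: Aset_eq Bset_minus_zero)
  qed
  then show ?thesis
    using theta_square_identity by blast
qed

end
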